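(* Let $G$ be a regular graph on $n$ vertices with Laplacian $L$, and suppose that $\operatorname{tr}(L^m)<n^m$ for some integer $m\ge 2$. Then $$t(\bar G)\ \ge\ n^{n-2}\left(1-\frac{(\operatorname{tr}(L^m))^{1/m}}{n}\right)\exp\!\left(-\sum_{k=1}^{m-1}\frac{\operatorname{tr}(L^k)-(\operatorname{tr}(L^m))^{k/m}}{k\,n^k}\right).$$ Moreover, the right-hand side converges to $t(\bar G)$ as $m\to\infty$.
   Context: All graphs are finite, simple and undirected. $t(H)$ denotes the number of labeled spanning trees of a graph $H$; $\bar G$ is the complement of $G$. The Laplacian of $G$ is $L=D-A$, where $A$ is the adjacency matrix and $D$ the diagonal matrix of vertex degrees; $\operatorname{tr}$ denotes the trace. *)

theory Defs
  imports "HOL-Analysis.Analysis" "Jordan_Normal_Form.Matrix"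
begin

definition simple_graph :: "nat \<Rightarrow> (nat \<Rightarrow> nat \<Rightarrow> bool) \<Rightarrow> bool" where
  "simple_graph n E \<longleftrightarrow> (\<forall>i<n. \<forall>j<n. E i j \<longleftrightarrow> E j i) \<and> (\<forall>i<n. \<not> E i i)"

definition degree :: "nat \<Rightarrow> (nat \<Rightarrow> nat \<Rightarrow> bool) \<Rightarrow> nat \<Rightarrow> nat" where
  "degree n E i = card {j. j < n \<and> E i j}"

definition regular_graph :: "nat \<Rightarrow> (nat \<Rightarrow> nat \<Rightarrow> bool) \<Rightarrow> bool" where
  "regular_graph n E \<longleftrightarrow> (\<exists>d. \<forall>i<n. degree n E i = d)"

definition complement_graph :: "(nat \<Rightarrow> nat \<Rightarrow> bool) \<Rightarrow> nat \<Rightarrow> nat \<Rightarrow> bool" where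
  "complement_graph E i j \<longleftrightarrow> i \<noteq> j \<and> \<not> E i j"

definition adjacency_mat :: "nat \<Rightarrow> (nat \<Rightarrow> nat \<Rightarrow> bool) \<Rightarrow> real mat" where
  "adjacency_mat n E = mat n n (\<lambda>(i, j). if E i j then 1 else 0)"

definition degree_mat :: "nat \<Rightarrow> (nat \<Rightarrow> nat \<Rightarrow> bool) \<Rightarrow> real mat" where
  "degree_mat n E = mat n n (\<lambda>(i, j). if i = j then real (degree n E i) else 0)"

definition laplacian :: "nat \<Rightarrow> (nat \<Rightarrow> nat \<Rightarrow> bool) \<Rightarrow> real mat" where
  "laplacian n E = degree_mat n E - adjacency_mat n E"

definition mat_trace :: "real mat \<Rightarrow> real" where
  "mat_trace A = (\<Sum>i<dim_row A. A $$ (i, i))"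

definition graph_edges :: "nat \<Rightarrow> (nat \<Rightarrow> nat \<Rightarrow> bool) \<Rightarrow> nat set set" where
  "graph_edges n E = {{i, j} | i j. i < n \<and> j < n \<and> i \<noteq> j \<and> E i j}"

definition edges_connected :: "nat \<Rightarrow> nat set set \<Rightarrow> bool" where
  "edges_connected n T \<longleftrightarrow>
     (\<forall>u<n. \<forall>v<n. (\<lambda>a b. {a, b} \<in> T)\<^sup>*\<^sup>* u v)"

definition spanning_tree :: "nat \<Rightarrow> (nat \<Rightarrow> nat \<Rightarrow> bool) \<Rightarrow> nat set set \<Rightarrow> bool" where
  "spanning_tree n E T \<longleftrightarrow> T \<subseteq> graph_edges n E \<and> edges_connected n T \<and> card T = n - 1"

definition num_spanning_trees :: "nat \<Rightarrow> (nat \<Rightarrow> nat \<Rightarrow> bool) \<Rightarrow> nat" where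
  "num_spanning_trees n E = card {T. spanning_tree n E T}"

definition tree_bound :: "nat \<Rightarrow> (nat \<Rightarrow> nat \<Rightarrow> bool) \<Rightarrow> nat \<Rightarrow> real" where
  "tree_bound n E m =
    (let tr = (\<lambda>k. mat_trace (laplacian n E ^\<^sub>m k)) in
     real n ^ (n - 2) * (1 - tr m powr (1 / real m) / real n) *
     exp (- (\<Sum>k = 1..<m. (tr k - tr m powr (real k / real m)) / (real k * real n ^ k))))"

end

theory Submission
  imports Defs "Jordan_Normal_Form.Schur_Decomposition"
begin

(* The Laplacian L of G is symmetric and diagonally dominant, so its eigenvalues e_i are real and
   nonnegative, and tr (L^k) is the power sum of the e_i. For every simple graph
   L(G) + L(complement G) = n I - J, and det (L(H) + J) = n^2 det (reduced L(H)) = n^2 t(H) by the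
   matrix-tree theorem (proved via Cauchy-Binet and the unimodularity of incidence matrices).
   Hence t(complement G) = n^(n-2) prod (1 - x_i) with x_i = e_i / n, and 0 <= x_i < 1 by the trace
   hypothesis.
   With p_k = sum x_i^k and M = p_m^(1/m), the logarithm of the product is - sum_k p_k / k and
   ln (1 - M) = - sum_k M^k / k. The terms k < m give the exponential factor of the bound, and for
   k >= m we have p_k <= M^k because every x_i <= M; so the bound is at most the product. As
   m -> oo, M tends to max x_i < 1 and both tails vanish. *)

section \<open>Spectrum of the Laplacian\<close>

lemma mat_trace_eq_sum_list_diag_mat: "mat_trace A = sum_list (diag_mat A)"
  unfolding mat_trace_def diag_mat_def by (simp add: sum_list_sum_nth atLeast0LessThan)

lemma sum_list_diag_mat_mult_comm:
  fixes A B :: "'a::comm_ring_1 mat"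
  assumes A: "A \<in> carrier_mat n m" and B: "B \<in> carrier_mat m n"
  shows "sum_list (diag_mat (A * B)) = sum_list (diag_mat (B * A))"
proof -
  have "sum_list (diag_mat (A * B)) = (\<Sum>i<n. \<Sum>j<m. A $$ (i,j) * B $$ (j,i))"
    using A B by (auto simp: diag_mat_def sum_list_sum_nth scalar_prod_def lessThan_atLeast0
        intro!: sum.cong)
  also have "\<dots> = (\<Sum>j<m. \<Sum>i<n. B $$ (j,i) * A $$ (i,j))"
    by (subst sum.swap) (simp add: mult.commute)
  also have "\<dots> = sum_list (diag_mat (B * A))"
    using A B by (auto simp: diag_mat_def sum_list_sum_nth scalar_prod_def lessThan_atLeast0
        intro!: sum.cong)
  finally show ?thesis .
qed

lemma sum_list_diag_mat_similar_pow:
  fixes A B :: "'a::comm_ring_1 mat"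
  assumes w: "similar_mat_wit A B P Q" and A: "A \<in> carrier_mat n n"
  shows "sum_list (diag_mat (A ^\<^sub>m k)) = sum_list (diag_mat (B ^\<^sub>m k))"
proof -
  from similar_mat_witD2[OF A w] have B: "B \<in> carrier_mat n n" and P: "P \<in> carrier_mat n n"
    and Q: "Q \<in> carrier_mat n n" and QP: "Q * P = 1\<^sub>m n" by auto
  have Bk: "B ^\<^sub>m k \<in> carrier_mat n n" using B by simp
  then have BkQ: "B ^\<^sub>m k * Q \<in> carrier_mat n n" using Q by simp
  have "A ^\<^sub>m k = P * (B ^\<^sub>m k * Q)"
    using similar_mat_wit_pow_id[OF w] P Bk Q by (simp add: assoc_mult_mat)
  then have "sum_list (diag_mat (A ^\<^sub>m k)) = sum_list (diag_mat (B ^\<^sub>m k * Q * P))"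
    using sum_list_diag_mat_mult_comm[OF P BkQ] by simp
  also have "B ^\<^sub>m k * Q * P = B ^\<^sub>m k"
    using Bk Q P QP by (simp add: assoc_mult_mat[of _ n n _ n _ n] right_mult_one_mat)
  finally show ?thesis .
qed

lemma upper_triangular_mult:
  assumes A: "A \<in> carrier_mat n n" and B: "B \<in> carrier_mat n n"
    and "upper_triangular A" and "upper_triangular B"
  shows "upper_triangular (A * B)"
proof
  fix i j assume ji: "j < i" and i: "i < dim_row (A * B)"
  have "A $$ (i,k) * B $$ (k,j) = 0" if "k < n" for k
    using upper_triangularD[of A k i] upper_triangularD[of B j k] assms ji i that
    by (cases "k < i") auto
  then show "(A * B) $$ (i,j) = 0"
    using A B i ji by (auto simp: scalar_prod_def intro!: sum.neutral)
qed

lemma diag_upper_triangular_mult: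
  assumes A: "A \<in> carrier_mat n n" and B: "B \<in> carrier_mat n n"
    and "upper_triangular A" and "upper_triangular B" and i: "i < n"
  shows "(A * B) $$ (i,i) = A $$ (i,i) * B $$ (i,i)"
proof -
  have zero: "A $$ (i,k) * B $$ (k,i) = 0" if "k \<in> {0..<n} - {i}" for k
    using upper_triangularD[of A k i] upper_triangularD[of B i k] assms that
    by (cases "k < i") auto
  have "(A * B) $$ (i,i) = (\<Sum>k\<in>{0..<n}. A $$ (i,k) * B $$ (k,i))"
    using A B i by (simp add: scalar_prod_def)
  also have "\<dots> = A $$ (i,i) * B $$ (i,i) + (\<Sum>k\<in>{0..<n}-{i}. A $$ (i,k) * B $$ (k,i))"
    by (rule sum.remove) (use i in auto)
  also have "(\<Sum>k\<in>{0..<n}-{i}. A $$ (i,k) * B $$ (k,i)) = 0"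
    using zero by (rule sum.neutral[OF ballI])
  finally show ?thesis by simp
qed

lemma upper_triangular_pow:
  assumes A: "A \<in> carrier_mat n n" and ut: "upper_triangular A"
  shows "upper_triangular (A ^\<^sub>m k) \<and> diag_mat (A ^\<^sub>m k) = map (\<lambda>a. a ^ k) (diag_mat A)"
proof (induction k)
  case 0
  then show ?case using A by (auto simp: diag_mat_def)
next
  case (Suc k)
  have Ak: "A ^\<^sub>m k \<in> carrier_mat n n" using A by simp
  have "diag_mat (A ^\<^sub>m Suc k) = map (\<lambda>a. a ^ Suc k) (diag_mat A)"
    using Suc diag_upper_triangular_mult[OF Ak A _ ut] A
    by (auto simp: diag_mat_def power_Suc2 simp del: power_Suc)
  then show ?case
    using Suc upper_triangular_mult[OF Ak A _ ut] by simp
qed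

lemma eigenvector_of_real_mat:
  fixes L :: "real mat"
  assumes L: "L \<in> carrier_mat n n" and ev: "eigenvector (map_mat complex_of_real L) v c"
  shows "v \<in> carrier_vec n" "v \<noteq> 0\<^sub>v n"
    "\<And>i. i < n \<Longrightarrow> (\<Sum>j<n. of_real (L$$(i,j)) * v$j) = c * v$i"
proof -
  show v: "v \<in> carrier_vec n" "v \<noteq> 0\<^sub>v n" using ev L unfolding eigenvector_def by auto
  fix i assume i: "i < n"
  have "(map_mat complex_of_real L *\<^sub>v v) $ i = (c \<cdot>\<^sub>v v) $ i"
    using ev unfolding eigenvector_def by simp
  then show "(\<Sum>j<n. of_real (L$$(i,j)) * v$j) = c * v$i"
    using i L v by (simp add: scalar_prod_def lessThan_atLeast0)
qed

lemma sum_list_diag_mat_pow_eq_eigenvalues: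
  fixes A :: "complex mat"
  assumes A: "A \<in> carrier_mat n n" and cp: "char_poly A = (\<Prod>a\<leftarrow>cs. [:- a, 1:])"
  shows "sum_list (diag_mat (A ^\<^sub>m k)) = (\<Sum>c\<leftarrow>cs. c ^ k)"
proof -
  obtain B P Q where sd: "schur_decomposition A cs = (B,P,Q)"
    by (cases "schur_decomposition A cs") auto
  from schur_decomposition[OF A cp sd] have w: "similar_mat_wit A B P Q"
    and ut: "upper_triangular B" and dg: "diag_mat B = cs" by auto
  from similar_mat_witD2[OF A w] have B: "B \<in> carrier_mat n n" by auto
  have "sum_list (diag_mat (A ^\<^sub>m k)) = sum_list (diag_mat (B ^\<^sub>m k))"
    by (rule sum_list_diag_mat_similar_pow[OF w A])
  also have "\<dots> = (\<Sum>c\<leftarrow>cs. c ^ k)"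
    using upper_triangular_pow[OF B ut] dg by simp
  finally show ?thesis .
qed

text \<open>For a real symmetric matrix, the Rayleigh quotient \<open>v\<^sup>* L v\<close> of a complex eigenvector is
  both real and \<open>c \<parallel>v\<parallel>\<^sup>2\<close>.\<close>

lemma eigenvalue_real_symmetric:
  fixes L :: "real mat"
  assumes L: "L \<in> carrier_mat n n" and sym: "transpose_mat L = L"
    and ev: "eigenvector (map_mat complex_of_real L) v c"
  shows "Im c = 0"
proof -
  have v: "v \<in> carrier_vec n" and v0: "v \<noteq> 0\<^sub>v n"
    and Lv: "\<And>i. i < n \<Longrightarrow> (\<Sum>j<n. of_real (L$$(i,j)) * v$j) = c * v$i"
    using eigenvector_of_real_mat[OF L ev] by auto
  have Lij: "L$$(i,j) = L$$(j,i)" if "i < n" "j < n" for i j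
    using arg_cong[OF sym, of "\<lambda>M. M $$ (j,i)"] L that by simp
  define s where "s = (\<Sum>i<n. \<Sum>j<n. cnj (v$i) * of_real (L$$(i,j)) * v$j)"
  have "cnj s = (\<Sum>j<n. \<Sum>i<n. v$i * of_real (L$$(i,j)) * cnj (v$j))"
    unfolding s_def by (subst sum.swap) (simp add: mult.commute)
  also have "\<dots> = s"
    unfolding s_def by (intro sum.cong refl) (simp add: Lij mult.commute mult.left_commute)
  finally have "s \<in> \<real>" by (simp add: Reals_cnj_iff)
  have "s = (\<Sum>i<n. cnj (v$i) * (\<Sum>j<n. of_real (L$$(i,j)) * v$j))"
    unfolding s_def by (simp add: sum_distrib_left mult.assoc)
  also have "\<dots> = (\<Sum>i<n. c * of_real ((cmod (v$i))\<^sup>2))"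
    by (intro sum.cong refl, subst Lv) (auto simp only: complex_norm_square mult_ac)
  also have "\<dots> = c * of_real (\<Sum>i<n. (cmod (v$i))\<^sup>2)"
    by (simp add: sum_distrib_left)
  finally have s: "s = c * of_real (\<Sum>i<n. (cmod (v$i))\<^sup>2)" .
  obtain i0 where i0: "i0 < n" "v$i0 \<noteq> 0"
    using v v0 by (metis eq_vecI carrier_vecD index_zero_vec)
  have "0 < (\<Sum>i<n. (cmod (v$i))\<^sup>2)"
    by (rule sum_pos2[of _ i0]) (use i0 in auto)
  then show ?thesis using \<open>s \<in> \<real>\<close> s by (auto simp: complex_is_Real_iff)
qed

text \<open>Gershgorin: evaluate the eigenvalue equation at a coordinate of maximal modulus.\<close>

lemma eigenvalue_Re_nonneg_diagonally_dominant:
  fixes L :: "real mat"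
  assumes L: "L \<in> carrier_mat n n"
    and dd: "\<And>i. i < n \<Longrightarrow> (\<Sum>j\<in>{..<n}-{i}. \<bar>L$$(i,j)\<bar>) \<le> L$$(i,i)"
    and ev: "eigenvector (map_mat complex_of_real L) v c"
  shows "0 \<le> Re c"
proof -
  have v: "v \<in> carrier_vec n" and v0: "v \<noteq> 0\<^sub>v n"
    and Lv: "\<And>i. i < n \<Longrightarrow> (\<Sum>j<n. of_real (L$$(i,j)) * v$j) = c * v$i"
    using eigenvector_of_real_mat[OF L ev] by auto
  obtain i0 where i0: "i0 < n" "v$i0 \<noteq> 0"
    using v v0 by (metis eq_vecI carrier_vecD index_zero_vec)
  obtain i where i: "i < n" and imax: "cmod (v$i) = Max ((\<lambda>j. cmod (v$j)) ` {..<n})"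
    using Max_in[of "(\<lambda>j. cmod (v$j)) ` {..<n}"] i0(1) by fastforce
  have le: "cmod (v$j) \<le> cmod (v$i)" if "j < n" for j
    unfolding imax using that by simp
  have vi: "0 < cmod (v$i)" using le[OF i0(1)] i0 by auto
  have "(c - of_real (L$$(i,i))) * v$i = (\<Sum>j\<in>{..<n}-{i}. of_real (L$$(i,j)) * v$j)"
    using Lv[OF i] sum.remove[of "{..<n}" i "\<lambda>j. of_real (L$$(i,j)) * v$j"] i
    by (simp add: algebra_simps)
  then have "cmod (c - of_real (L$$(i,i))) * cmod (v$i)
      = cmod (\<Sum>j\<in>{..<n}-{i}. of_real (L$$(i,j)) * v$j)"
    by (metis norm_mult)
  also have "\<dots> \<le> (\<Sum>j\<in>{..<n}-{i}. \<bar>L$$(i,j)\<bar> * cmod (v$j))"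
    by (rule order_trans[OF norm_sum]) (simp add: norm_mult)
  also have "\<dots> \<le> (\<Sum>j\<in>{..<n}-{i}. \<bar>L$$(i,j)\<bar>) * cmod (v$i)"
    by (auto simp: sum_distrib_right intro!: sum_mono mult_left_mono le)
  also have "\<dots> \<le> L$$(i,i) * cmod (v$i)"
    using dd[OF i] vi by simp
  finally have "cmod (c - of_real (L$$(i,i))) \<le> L$$(i,i)" using vi by simp
  then show ?thesis
    using abs_Re_le_cmod[of "c - of_real (L$$(i,i))"] by simp
qed

lemma real_spectrum_list:
  fixes L :: "real mat"
  assumes L: "L \<in> carrier_mat n n"
    and real: "\<And>v c. eigenvector (map_mat complex_of_real L) v c \<Longrightarrow> Im c = 0"
  obtains es :: "real list" where "length es = n"
    and "\<And>e. e \<in> set es \<Longrightarrow> eigenvalue (map_mat complex_of_real L) (complex_of_real e)"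
    and "\<And>k. mat_trace (L ^\<^sub>m k) = (\<Sum>e\<leftarrow>es. e ^ k)"
    and "\<And>c. det (c \<cdot>\<^sub>m 1\<^sub>m n - L) = (\<Prod>e\<leftarrow>es. c - e)"
proof -
  define Lc where "Lc = map_mat complex_of_real L"
  have Lc: "Lc \<in> carrier_mat n n" using L unfolding Lc_def by simp
  obtain cs where cp: "char_poly Lc = (\<Prod>a\<leftarrow>cs. [:- a, 1:])" and len: "length cs = n"
    using char_poly_factorized[OF Lc] by blast
  have eig: "eigenvalue Lc c" if "c \<in> set cs" for c
  proof -
    have "poly (char_poly Lc) c = 0"
      unfolding cp poly_prod_list using that by (induct cs) auto
    then show ?thesis using eigenvalue_root_char_poly[OF Lc] by simp
  qed
  define es where "es = map Re cs"
  have cs: "cs = map complex_of_real es"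
    unfolding es_def map_map
    by (rule sym, rule map_idI)
      (use eig real in \<open>auto simp: Lc_def eigenvalue_def complex_eq_iff\<close>)
  show thesis
  proof
    show "length es = n" using len es_def by simp
    show "eigenvalue (map_mat complex_of_real L) (complex_of_real e)" if "e \<in> set es" for e
      using eig that unfolding cs Lc_def by auto
  next
    fix c :: real
    have "map_mat complex_of_real (c \<cdot>\<^sub>m 1\<^sub>m n - L) = - char_matrix Lc (of_real c)"
      unfolding char_matrix_def Lc_def using L by (auto intro!: eq_matI)
    then have "complex_of_real (det (c \<cdot>\<^sub>m 1\<^sub>m n - L)) = poly (char_poly Lc) (of_real c)"
      using char_poly_matrix[OF Lc] by (metis of_real_hom.hom_det)
    also have "\<dots> = complex_of_real (\<Prod>e\<leftarrow>es. c - e)"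
      unfolding cp poly_prod_list cs by (induct es) auto
    finally show "det (c \<cdot>\<^sub>m 1\<^sub>m n - L) = (\<Prod>e\<leftarrow>es. c - e)" by (simp only: of_real_eq_iff)
  next
    fix k :: nat
    have "complex_of_real (mat_trace (L ^\<^sub>m k)) = sum_list (diag_mat (Lc ^\<^sub>m k))"
      using L unfolding mat_trace_eq_sum_list_diag_mat Lc_def
      by (auto simp: of_real_hom.mat_hom_pow[OF L, symmetric] diag_mat_def of_real_hom.hom_sum_list
          intro!: arg_cong[where f=sum_list] map_cong)
    also have "\<dots> = (\<Sum>c\<leftarrow>cs. c ^ k)" by (rule sum_list_diag_mat_pow_eq_eigenvalues[OF Lc cp])
    also have "\<dots> = complex_of_real (\<Sum>e\<leftarrow>es. e ^ k)"
      unfolding cs by (simp add: o_def of_real_hom.hom_sum_list)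
    finally show "mat_trace (L ^\<^sub>m k) = (\<Sum>e\<leftarrow>es. e ^ k)" by (simp only: of_real_eq_iff)
  qed
qed

lemma laplacian_carrier: "laplacian n E \<in> carrier_mat n n"
  unfolding laplacian_def degree_mat_def adjacency_mat_def by (rule minus_carrier_mat) simp

lemma dim_laplacian [simp]: "dim_row (laplacian n E) = n" "dim_col (laplacian n E) = n"
  using laplacian_carrier by auto

lemma laplacian_index:
  assumes "i < n" "j < n"
  shows "laplacian n E $$ (i,j) = (if i = j then real (degree n E i) else 0) - (if E i j then 1 else 0)"
  using assms by (simp add: laplacian_def degree_mat_def adjacency_mat_def)

lemma degree_eq_sum: "real (degree n E i) = (\<Sum>j<n. if E i j then 1 else 0)"
  by (simp add: degree_def sum.If_cases Int_def lessThan_def conj_commute)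

lemma laplacian_symmetric:
  assumes "simple_graph n E" "i < n" "j < n"
  shows "laplacian n E $$ (i,j) = laplacian n E $$ (j,i)"
  using assms by (auto simp: laplacian_index simple_graph_def)

lemma transpose_laplacian:
  assumes "simple_graph n E"
  shows "transpose_mat (laplacian n E) = laplacian n E"
  using laplacian_symmetric[OF assms] by (intro eq_matI) auto

lemma laplacian_row_sum:
  assumes sg: "simple_graph n E" and i: "i < n"
  shows "(\<Sum>j<n. laplacian n E $$ (i,j)) = 0"
proof -
  have "(\<Sum>j<n. laplacian n E $$ (i,j))
      = (\<Sum>j<n. if i = j then real (degree n E i) else 0) - (\<Sum>j<n. if E i j then 1 else 0)"
    using i by (simp add: laplacian_index sum_subtractf)
  then show ?thesis using i by (simp add: degree_eq_sum)
qed

lemma laplacian_diagonally_dominant: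
  assumes sg: "simple_graph n E" and i: "i < n"
  shows "(\<Sum>j\<in>{..<n}-{i}. \<bar>laplacian n E $$ (i,j)\<bar>) \<le> laplacian n E $$ (i,i)"
proof -
  have nE: "\<not> E i i" using sg i unfolding simple_graph_def by blast
  have "(\<Sum>j\<in>{..<n}-{i}. \<bar>laplacian n E $$ (i,j)\<bar>) = (\<Sum>j\<in>{..<n}-{i}. if E i j then 1 else 0)"
    using i by (intro sum.cong refl) (auto simp: laplacian_index)
  also have "\<dots> = (\<Sum>j<n. if E i j then 1 else 0)"
    by (rule sum.mono_neutral_left) (use nE in auto)
  finally show ?thesis using i nE by (simp add: laplacian_index degree_eq_sum)
qed

lemma laplacian_spectrum:
  assumes sg: "simple_graph n E"
  obtains es :: "real list" where "length es = n" and "\<And>e. e \<in> set es \<Longrightarrow> 0 \<le> e"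
    and "\<And>k. mat_trace (laplacian n E ^\<^sub>m k) = (\<Sum>e\<leftarrow>es. e ^ k)"
    and "\<And>c. det (c \<cdot>\<^sub>m 1\<^sub>m n - laplacian n E) = (\<Prod>e\<leftarrow>es. c - e)"
proof -
  let ?L = "laplacian n E"
  have Im_eigenvalue: "\<And>v c. eigenvector (map_mat complex_of_real ?L) v c \<Longrightarrow> Im c = 0"
    by (rule eigenvalue_real_symmetric[OF laplacian_carrier[of n E] transpose_laplacian[OF sg]])
  have nonneg: "0 \<le> e" if ev: "eigenvalue (map_mat complex_of_real ?L) (complex_of_real e)" for e
  proof -
    obtain v where "eigenvector (map_mat complex_of_real ?L) v (complex_of_real e)"
      using ev unfolding eigenvalue_def by blast
    from eigenvalue_Re_nonneg_diagonally_dominant[OF laplacian_carrier[of n E]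
        laplacian_diagonally_dominant[OF sg] this]
    show ?thesis by simp
  qed
  show thesis
    using laplacian_carrier[of n E] Im_eigenvalue
  proof (rule real_spectrum_list)
    fix es :: "real list"
    assume "length es = n"
      and "\<And>e. e \<in> set es \<Longrightarrow> eigenvalue (map_mat complex_of_real ?L) (complex_of_real e)"
      and "\<And>k. mat_trace (?L ^\<^sub>m k) = (\<Sum>e\<leftarrow>es. e ^ k)"
      and "\<And>c. det (c \<cdot>\<^sub>m 1\<^sub>m n - ?L) = (\<Prod>e\<leftarrow>es. c - e)"
    with nonneg show thesis by (intro that) auto
  qed
qed

section \<open>The Cauchy--Binet formula\<close>

definition select_cols :: "nat \<Rightarrow> 'a mat \<Rightarrow> (nat \<Rightarrow> nat) \<Rightarrow> 'a mat" where
  "select_cols m A g = mat m m (\<lambda>(i,j). A $$ (i, g j))"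

lemma select_cols_carrier [simp]: "select_cols m A g \<in> carrier_mat m m"
  and dim_select_cols [simp]: "dim_row (select_cols m A g) = m" "dim_col (select_cols m A g) = m"
  by (simp_all add: select_cols_def)

lemma select_cols_cong: "(\<And>j. j < m \<Longrightarrow> g j = h j) \<Longrightarrow> select_cols m A g = select_cols m A h"
  by (auto simp: select_cols_def intro!: eq_matI)

lemma det_select_cols:
  fixes A :: "'a::comm_ring_1 mat"
  shows "det (select_cols m A g) = (\<Sum>p | p permutes {0..<m}. signof p * (\<Prod>i=0..<m. A$$(p i, g i)))"
proof -
  have "det (select_cols m A g) = det (transpose_mat (select_cols m A g))"
    by (simp add: det_transpose[of _ m])
  also have "\<dots> = (\<Sum>p | p permutes {0..<m}. signof p *
      (\<Prod>i=0..<m. transpose_mat (select_cols m A g) $$ (i, p i)))"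
    by (rule det_def') simp
  also have "\<dots> = (\<Sum>p | p permutes {0..<m}. signof p * (\<Prod>i=0..<m. A$$(p i, g i)))"
    by (intro sum.cong refl arg_cong2[where f="(*)"] prod.cong)
      (auto simp: select_cols_def dest: permutes_in_image)
  finally show ?thesis .
qed

lemma det_select_cols_comp_permutes:
  fixes A :: "'a::comm_ring_1 mat"
  assumes p: "p permutes {0..<m}"
  shows "det (select_cols m A (g \<circ> p)) = signof p * det (select_cols m A g)"
proof -
  let ?C = "transpose_mat (select_cols m A g)"
  have "select_cols m A (g \<circ> p) = transpose_mat (mat m m (\<lambda>(i,j). ?C $$ (p i, j)))"
    using permutes_in_image[OF p] by (intro eq_matI) (auto simp: select_cols_def)
  then have "det (select_cols m A (g \<circ> p)) = det (mat m m (\<lambda>(i,j). ?C $$ (p i, j)))"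
    by (simp add: det_transpose[of _ m])
  also have "\<dots> = signof p * det ?C" by (rule det_permute_rows[OF _ p]) simp
  finally show ?thesis by (simp add: det_transpose[of _ m])
qed

lemma det_select_cols_not_inj:
  fixes A :: "'a::comm_ring_1 mat"
  assumes "\<not> inj_on g {0..<m}"
  shows "det (select_cols m A g) = 0"
proof -
  from assms obtain i j where "i < m" "j < m" "g i = g j" "i \<noteq> j"
    unfolding inj_on_def by auto
  then show ?thesis
    by (intro det_identical_columns[of _ m i j]) (auto simp: select_cols_def intro!: eq_vecI)
qed

text \<open>Expanding each entry of \<open>A B\<^sup>T\<close> in the Leibniz formula and collecting by the column
  choice \<open>g\<close> of the entries of \<open>A\<close>.\<close>

lemma det_mult_transpose_expand:
  fixes A B :: "'a::comm_ring_1 mat"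
  assumes A: "A \<in> carrier_mat m N" and B: "B \<in> carrier_mat m N"
  shows "det (A * transpose_mat B)
    = (\<Sum>g \<in> {0..<m} \<rightarrow>\<^sub>E {0..<N}. (\<Prod>i=0..<m. A$$(i,g i)) * det (select_cols m B g))"
proof -
  let ?P = "{p. p permutes {0..<m}}"
  let ?G = "{0..<m} \<rightarrow>\<^sub>E {0..<N}"
  have AB: "A * transpose_mat B \<in> carrier_mat m m" using A B by simp
  have prod_entries: "(\<Prod>i=0..<m. (A * transpose_mat B) $$ (i, p i))
      = (\<Sum>g\<in>?G. (\<Prod>i=0..<m. A$$(i,g i)) * (\<Prod>i=0..<m. B$$(p i, g i)))" if p: "p \<in> ?P" for p
  proof -
    have "(\<Prod>i=0..<m. (A * transpose_mat B) $$ (i, p i))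
        = (\<Prod>i=0..<m. \<Sum>k\<in>{0..<N}. A$$(i,k) * B$$(p i,k))"
      using p A B by (intro prod.cong refl) (auto simp: scalar_prod_def dest: permutes_in_image)
    also have "\<dots> = (\<Sum>g\<in>?G. \<Prod>i=0..<m. A$$(i,g i) * B$$(p i, g i))"
      by (rule prod_sum_PiE) auto
    finally show ?thesis by (simp add: prod.distrib)
  qed
  have "det (A * transpose_mat B)
      = (\<Sum>p\<in>?P. signof p * (\<Prod>i=0..<m. (A * transpose_mat B) $$ (i, p i)))"
    by (rule det_def'[OF AB])
  also have "\<dots> = (\<Sum>p\<in>?P. \<Sum>g\<in>?G. (\<Prod>i=0..<m. A$$(i,g i)) * (signof p * (\<Prod>i=0..<m. B$$(p i, g i))))"
    by (simp add: prod_entries sum_distrib_left mult.left_commute)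
  also have "\<dots> = (\<Sum>g\<in>?G. (\<Prod>i=0..<m. A$$(i,g i)) * det (select_cols m B g))"
    by (subst sum.swap) (simp add: sum_distrib_left det_select_cols)
  finally show ?thesis .
qed

lemma comp_permutes_bij_betw:
  fixes g0 :: "nat \<Rightarrow> nat"
  assumes g0: "bij_betw g0 {0..<m} S" "g0 \<in> extensional {0..<m}"
    and p: "p permutes {0..<m}" and S: "S \<subseteq> {0..<N}"
  shows "g0 \<circ> p \<in> {g \<in> {0..<m} \<rightarrow>\<^sub>E {0..<N}. inj_on g {0..<m} \<and> g ` {0..<m} = S}"
proof -
  have im: "(g0 \<circ> p) ` {0..<m} = S"
    using g0(1) permutes_image[OF p] unfolding bij_betw_def image_comp[symmetric] by simp
  moreover have "inj_on (g0 \<circ> p) {0..<m}"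
    using g0(1) permutes_image[OF p] permutes_inj_on[OF p]
    by (intro comp_inj_on) (auto simp: bij_betw_def)
  moreover have "g0 \<circ> p \<in> extensional {0..<m}"
    using g0(2) permutes_not_in[OF p] by (auto simp: extensional_def)
  ultimately show ?thesis using S by (auto simp: PiE_def)
qed

lemma bij_betw_eq_comp_permutes:
  fixes g0 g :: "nat \<Rightarrow> nat"
  assumes g0: "bij_betw g0 {0..<m} S" "g0 \<in> extensional {0..<m}"
    and g: "g \<in> {0..<m} \<rightarrow>\<^sub>E {0..<N}" "inj_on g {0..<m}" "g ` {0..<m} = S"
  obtains p where "p permutes {0..<m}" and "g = g0 \<circ> p"
proof
  define p where "p i = (if i < m then the_inv_into {0..<m} g0 (g i) else i)" for i
  have "bij_betw (the_inv_into {0..<m} g0 \<circ> g) {0..<m} {0..<m}"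
    using g(2,3) bij_betw_the_inv_into[OF g0(1)] by (intro bij_betw_trans) (auto simp: bij_betw_def)
  then have "bij_betw p {0..<m} {0..<m}"
    by (rule bij_betw_cong[THEN iffD1, rotated]) (auto simp: p_def)
  then show "p permutes {0..<m}"
    by (rule bij_imp_permutes) (simp add: p_def)
  show "g = g0 \<circ> p"
  proof
    fix i
    show "g i = (g0 \<circ> p) i"
    proof (cases "i < m")
      case True
      then show ?thesis
        using g(3) f_the_inv_into_f[OF bij_betw_imp_inj_on[OF g0(1)]] g0(1)
        by (auto simp: p_def bij_betw_def)
    next
      case False
      then show ?thesis using g(1) g0(2) by (auto simp: p_def PiE_def extensional_def)
    qed
  qed
qed

lemma inj_on_comp_permutes:
  fixes g0 :: "nat \<Rightarrow> 'a" and m :: nat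
  assumes "inj_on g0 {0..<m}"
  shows "inj_on (\<lambda>p. g0 \<circ> p) {p. p permutes {0..<m}}"
proof (rule inj_onI)
  fix p q assume p: "p \<in> {p. p permutes {0..<m}}" and q: "q \<in> {p. p permutes {0..<m}}"
    and pq: "g0 \<circ> p = g0 \<circ> q"
  show "p = q"
  proof
    fix i
    show "p i = q i"
    proof (cases "i < m")
      case True
      then have "p i \<in> {0..<m}" "q i \<in> {0..<m}" using p q by (auto simp: permutes_in_image)
      then show ?thesis using fun_cong[OF pq, of i] assms by (auto simp: inj_on_def)
    next
      case False
      then show ?thesis using p q by (simp add: permutes_not_in)
    qed
  qed
qed

lemma sum_bij_betw_select_cols:
  fixes A B :: "'a::comm_ring_1 mat"
  assumes g0: "bij_betw g0 {0..<m} S" "g0 \<in> extensional {0..<m}" and S: "S \<subseteq> {0..<N}"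
  shows "(\<Sum>g | g \<in> {0..<m} \<rightarrow>\<^sub>E {0..<N} \<and> inj_on g {0..<m} \<and> g ` {0..<m} = S.
      (\<Prod>i=0..<m. A$$(i,g i)) * det (select_cols m B g))
    = det (select_cols m A g0) * det (select_cols m B g0)"
proof -
  let ?P = "{p. p permutes {0..<m}}"
  let ?T = "{g. g \<in> {0..<m} \<rightarrow>\<^sub>E {0..<N} \<and> inj_on g {0..<m} \<and> g ` {0..<m} = S}"
  have inj: "inj_on (\<lambda>p. g0 \<circ> p) ?P"
    by (rule inj_on_comp_permutes[OF bij_betw_imp_inj_on[OF g0(1)]])
  have image: "(\<lambda>p. g0 \<circ> p) ` ?P = ?T"
  proof
    show "(\<lambda>p. g0 \<circ> p) ` ?P \<subseteq> ?T"
    proof (rule image_subsetI)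
      fix p assume "p \<in> ?P"
      then show "g0 \<circ> p \<in> ?T" using comp_permutes_bij_betw[OF g0 _ S, of p] by simp
    qed
    show "?T \<subseteq> (\<lambda>p. g0 \<circ> p) ` ?P"
    proof
      fix g assume "g \<in> ?T"
      then have "g \<in> {0..<m} \<rightarrow>\<^sub>E {0..<N}" "inj_on g {0..<m}" "g ` {0..<m} = S" by auto
      then obtain p where "p permutes {0..<m}" "g = g0 \<circ> p"
        by (rule bij_betw_eq_comp_permutes[OF g0])
      then show "g \<in> (\<lambda>p. g0 \<circ> p) ` ?P" by auto
    qed
  qed
  have summand: "(\<Prod>i=0..<m. A$$(i, g0 (p i))) * det (select_cols m B (g0 \<circ> p))
      = signof p * (\<Prod>i=0..<m. select_cols m A g0 $$ (i, p i)) * det (select_cols m B g0)"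
    if p: "p \<in> ?P" for p
  proof -
    have "(\<Prod>i=0..<m. A$$(i, g0 (p i))) = (\<Prod>i=0..<m. select_cols m A g0 $$ (i, p i))"
      using p by (intro prod.cong refl) (auto simp: select_cols_def dest: permutes_in_image)
    then show ?thesis using det_select_cols_comp_permutes[of p m B g0] p by simp
  qed
  have "(\<Sum>g\<in>?T. (\<Prod>i=0..<m. A$$(i,g i)) * det (select_cols m B g))
      = (\<Sum>p\<in>?P. (\<Prod>i=0..<m. A$$(i, g0 (p i))) * det (select_cols m B (g0 \<circ> p)))"
    unfolding image[symmetric] by (subst sum.reindex[OF inj]) (simp add: o_def)
  also have "\<dots> = (\<Sum>p\<in>?P. signof p * (\<Prod>i=0..<m. select_cols m A g0 $$ (i, p i)))
      * det (select_cols m B g0)"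
    by (simp add: summand sum_distrib_right)
  also have "\<dots> = det (select_cols m A g0) * det (select_cols m B g0)"
    by (simp add: det_def'[of _ m])
  finally show ?thesis .
qed

theorem cauchy_binet:
  fixes A B :: "'a::comm_ring_1 mat"
  assumes A: "A \<in> carrier_mat m N" and B: "B \<in> carrier_mat m N"
  shows "det (A * transpose_mat B) = (\<Sum>S | S \<subseteq> {0..<N} \<and> card S = m.
     det (select_cols m A ((!) (sorted_list_of_set S))) * det (select_cols m B ((!) (sorted_list_of_set S))))"
proof -
  let ?G = "{0..<m} \<rightarrow>\<^sub>E {0..<N}"
  let ?GI = "{g \<in> ?G. inj_on g {0..<m}}"
  let ?SS = "{S. S \<subseteq> {0..<N} \<and> card S = m}"
  let ?F = "\<lambda>g. (\<Prod>i=0..<m. A$$(i,g i)) * det (select_cols m B g)"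
  define enum :: "nat set \<Rightarrow> nat \<Rightarrow> nat"
    where "enum S = restrict ((!) (sorted_list_of_set S)) {0..<m}" for S
  have enum_bij: "bij_betw (enum S) {0..<m} S" if S: "S \<in> ?SS" for S
  proof -
    have "finite S" using S by (auto intro: finite_subset)
    then have "bij_betw ((!) (sorted_list_of_set S)) {0..<m} S"
      using S by (intro bij_betw_nth) (auto simp: atLeast0LessThan)
    then show ?thesis by (rule bij_betw_cong[THEN iffD1, rotated]) (simp add: enum_def)
  qed
  have enum_ext: "enum S \<in> extensional {0..<m}" for S by (simp add: enum_def)
  have enum_cols: "select_cols m C (enum S) = select_cols m C ((!) (sorted_list_of_set S))"
    for C :: "'a mat" and S
    by (rule select_cols_cong) (simp add: enum_def)
  have finG: "finite ?G" by (intro finite_PiE) auto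
  have finSS: "finite ?SS" by (rule finite_subset[of _ "Pow {0..<N}"]) auto
  have image: "(\<lambda>g. g ` {0..<m}) ` ?GI \<subseteq> ?SS"
    by (auto simp: card_image)
  have "det (A * transpose_mat B) = (\<Sum>g\<in>?GI. ?F g)"
    unfolding det_mult_transpose_expand[OF A B]
    by (rule sum.mono_neutral_right[OF finG]) (auto simp: det_select_cols_not_inj)
  also have "\<dots> = (\<Sum>S\<in>?SS. \<Sum>g | g \<in> ?GI \<and> g ` {0..<m} = S. ?F g)"
    using finG by (intro sum.group[symmetric] finSS image) simp
  also have "\<dots> = (\<Sum>S\<in>?SS. det (select_cols m A (enum S)) * det (select_cols m B (enum S)))"
  proof (rule sum.cong[OF refl])
    fix S assume S: "S \<in> ?SS"
    have "{g. g \<in> ?GI \<and> g ` {0..<m} = S}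
        = {g. g \<in> ?G \<and> inj_on g {0..<m} \<and> g ` {0..<m} = S}" by auto
    then show "(\<Sum>g | g \<in> ?GI \<and> g ` {0..<m} = S. ?F g)
        = det (select_cols m A (enum S)) * det (select_cols m B (enum S))"
      using sum_bij_betw_select_cols[OF enum_bij[OF S] enum_ext, of N A B] S by simp
  qed
  finally show ?thesis by (simp only: enum_cols)
qed

section \<open>Determinants of arc-incidence matrices\<close>

text \<open>Square matrices whose columns have entries in \<open>{-1, 0, 1}\<close> with at most one \<open>1\<close> and at
  most one \<open>-1\<close>: the square submatrices of incidence matrices of directed graphs.\<close>

definition arc_incidence_mat :: "nat \<Rightarrow> real mat \<Rightarrow> bool" where
  "arc_incidence_mat k M \<longleftrightarrow> M \<in> carrier_mat k k \<and> (\<forall>i<k. \<forall>j<k. M$$(i,j) \<in> {-1,0,1})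
     \<and> (\<forall>i1<k. \<forall>i2<k. \<forall>j<k. M$$(i1,j) = 1 \<longrightarrow> M$$(i2,j) = 1 \<longrightarrow> i1 = i2)
     \<and> (\<forall>i1<k. \<forall>i2<k. \<forall>j<k. M$$(i1,j) = -1 \<longrightarrow> M$$(i2,j) = -1 \<longrightarrow> i1 = i2)"

lemma arc_incidence_matD:
  assumes "arc_incidence_mat k M"
  shows "M \<in> carrier_mat k k" "\<And>i j. i < k \<Longrightarrow> j < k \<Longrightarrow> M$$(i,j) \<in> {-1,0,1}"
    "\<And>i1 i2 j. i1 < k \<Longrightarrow> i2 < k \<Longrightarrow> j < k \<Longrightarrow> M$$(i1,j) = 1 \<Longrightarrow> M$$(i2,j) = 1 \<Longrightarrow> i1 = i2"
    "\<And>i1 i2 j. i1 < k \<Longrightarrow> i2 < k \<Longrightarrow> j < k \<Longrightarrow> M$$(i1,j) = -1 \<Longrightarrow> M$$(i2,j) = -1 \<Longrightarrow> i1 = i2"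
  using assms unfolding arc_incidence_mat_def by simp_all

lemma arc_incidence_mat_delete:
  assumes M: "arc_incidence_mat (Suc k) M" and i: "i < Suc k" and j: "j < Suc k"
  shows "arc_incidence_mat k (mat_delete M i j)"
proof -
  let ?f = "\<lambda>i'. if i' < i then i' else Suc i'"
  let ?g = "\<lambda>j'. if j' < j then j' else Suc j'"
  have idx: "mat_delete M i j $$ (i',j') = M $$ (?f i', ?g j')" if "i' < k" "j' < k" for i' j'
    using arc_incidence_matD(1)[OF M] that by (auto simp: mat_delete_def)
  have f: "?f i' < Suc k" if "i' < k" for i' using that by auto
  have g: "?g j' < Suc k" if "j' < k" for j' using that by auto
  have f_inj: "?f a = ?f b \<Longrightarrow> a = b" for a b by (auto split: if_splits)
  show ?thesis
    unfolding arc_incidence_mat_def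
  proof (intro conjI allI impI)
    show "mat_delete M i j \<in> carrier_mat k k"
      using arc_incidence_matD(1)[OF M] by (auto simp: mat_delete_def)
    show "mat_delete M i j $$ (i',j') \<in> {-1,0,1}" if "i' < k" "j' < k" for i' j'
      using arc_incidence_matD(2)[OF M f g] idx that by simp
    show "i1 = i2" if "i1 < k" "i2 < k" "j' < k"
      "mat_delete M i j $$ (i1,j') = 1" "mat_delete M i j $$ (i2,j') = 1" for i1 i2 j'
    proof (rule f_inj)
      show "?f i1 = ?f i2"
        using that by (intro arc_incidence_matD(3)[OF M f f g]) (simp_all add: idx)
    qed
    show "i1 = i2" if "i1 < k" "i2 < k" "j' < k"
      "mat_delete M i j $$ (i1,j') = -1" "mat_delete M i j $$ (i2,j') = -1" for i1 i2 j'
    proof (rule f_inj)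
      show "?f i1 = ?f i2"
        using that by (intro arc_incidence_matD(4)[OF M f f g]) (simp_all add: idx)
    qed
  qed
qed

lemma det_eq_0_if_col_sums_zero:
  fixes M :: "'a::field mat"
  assumes M: "M \<in> carrier_mat k k" and k: "0 < k"
    and cols: "\<And>j. j < k \<Longrightarrow> (\<Sum>i<k. M$$(i,j)) = 0"
  shows "det M = 0"
proof -
  let ?v = "vec k (\<lambda>_. 1::'a)"
  have "transpose_mat M *\<^sub>v ?v = 0\<^sub>v k"
    using M cols by (intro eq_vecI) (auto simp: scalar_prod_def lessThan_atLeast0)
  moreover have "?v \<noteq> 0\<^sub>v k"
  proof
    assume "?v = 0\<^sub>v k"
    then have "?v $ 0 = 0\<^sub>v k $ 0" by simp
    then show False using k by simp
  qed
  ultimately have "det (transpose_mat M) = 0"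
    using det_0_iff_vec_prod_zero_field[of "transpose_mat M" k] M
    by (metis carrier_vec_dim_vec dim_vec transpose_carrier_mat)
  then show ?thesis using det_transpose[OF M] by simp
qed

text \<open>A column with two nonzero entries contains exactly one \<open>1\<close> and one \<open>-1\<close>.\<close>

lemma arc_incidence_mat_col_sum:
  assumes M: "arc_incidence_mat k M" and j: "j < k"
    and i12: "i1 < k" "i2 < k" "i1 \<noteq> i2" "M$$(i1,j) \<noteq> 0" "M$$(i2,j) \<noteq> 0"
  shows "(\<Sum>i<k. M$$(i,j)) = 0"
proof -
  note vals = arc_incidence_matD(2)[OF M _ j] and
    one = arc_incidence_matD(3)[OF M _ _ j] and minus_one = arc_incidence_matD(4)[OF M _ _ j]
  have opp: "M$$(i1,j) + M$$(i2,j) = 0"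
    using vals[OF i12(1)] vals[OF i12(2)] one[OF i12(1,2)] minus_one[OF i12(1,2)] i12(3-5) by auto
  have both: "M$$(i1,j) = 1 \<or> M$$(i2,j) = 1" "M$$(i1,j) = -1 \<or> M$$(i2,j) = -1"
    using vals[OF i12(1)] vals[OF i12(2)] opp i12(4,5) by auto
  have rest: "M$$(i,j) = 0" if i: "i < k" "i \<noteq> i1" "i \<noteq> i2" for i
  proof (rule ccontr)
    assume "M$$(i,j) \<noteq> 0"
    then have "M$$(i,j) = 1 \<or> M$$(i,j) = -1" using vals[OF i(1)] by auto
    then show False
      using both one[OF i(1) i12(1)] one[OF i(1) i12(2)] minus_one[OF i(1) i12(1)]
        minus_one[OF i(1) i12(2)] i(2,3)
      by blast
  qed
  have "(\<Sum>i<k. M$$(i,j)) = M$$(i1,j) + M$$(i2,j) + (\<Sum>i\<in>{..<k}-{i1}-{i2}. M$$(i,j))"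
    using i12 by (simp add: sum.remove[of _ i1] sum.remove[of _ i2])
  also have "(\<Sum>i\<in>{..<k}-{i1}-{i2}. M$$(i,j)) = 0"
    using rest by (intro sum.neutral) auto
  finally show ?thesis using opp by simp
qed

lemma det_single_nonzero_in_col:
  fixes M :: "'a::comm_ring_1 mat"
  assumes M: "M \<in> carrier_mat n n" and i: "i < n" and j: "j < n"
    and zero: "\<And>i'. i' < n \<Longrightarrow> i' \<noteq> i \<Longrightarrow> M $$ (i',j) = 0"
  shows "det M = M $$ (i,j) * ((-1)^(i+j) * det (mat_delete M i j))"
proof -
  have "det M = (\<Sum>i'<n. M $$ (i',j) * cofactor M i' j)"
    by (rule laplace_expansion_column[OF M j])
  also have "\<dots> = (\<Sum>i'\<in>{i}. M $$ (i',j) * cofactor M i' j)"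
    using i zero by (intro sum.mono_neutral_right) auto
  finally show ?thesis by (simp add: cofactor_def)
qed

text \<open>Either some column has at most one nonzero entry, and we expand along it, or every column
  sums to zero.\<close>

lemma det_arc_incidence_mat:
  "arc_incidence_mat k M \<Longrightarrow> det M \<in> {-1, 0, 1}"
proof (induct k arbitrary: M)
  case 0
  then show ?case by (simp add: arc_incidence_mat_def)
next
  case (Suc k M)
  note M = arc_incidence_matD(1)[OF Suc.prems]
  show ?case
  proof (cases "\<exists>j<Suc k. \<forall>i1<Suc k. \<forall>i2<Suc k. M$$(i1,j) \<noteq> 0 \<longrightarrow> M$$(i2,j) \<noteq> 0 \<longrightarrow> i1 = i2")
    case True
    then obtain j where j: "j < Suc k"
      and single: "\<And>i1 i2. i1 < Suc k \<Longrightarrow> i2 < Suc k \<Longrightarrow> M$$(i1,j) \<noteq> 0 \<Longrightarrow> M$$(i2,j) \<noteq> 0 \<Longrightarrow> i1 = i2"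
      by blast
    show ?thesis
    proof (cases "\<exists>i<Suc k. M$$(i,j) \<noteq> 0")
      case False
      then show ?thesis by (simp add: laplace_expansion_column[OF M j])
    next
      case True
      then obtain i where i: "i < Suc k" and nz: "M$$(i,j) \<noteq> 0" by blast
      have "det M = M $$ (i,j) * ((-1)^(i+j) * det (mat_delete M i j))"
        using single[OF _ i _ nz] by (intro det_single_nonzero_in_col[OF M i j]) auto
      moreover have "det (mat_delete M i j) \<in> {-1,0,1}"
        by (rule Suc.hyps, rule arc_incidence_mat_delete[OF Suc.prems i j])
      moreover have "M $$ (i,j) \<in> {-1,0,1}" using arc_incidence_matD(2)[OF Suc.prems i j] .
      moreover have "(-1::real)^(i+j) \<in> {-1,1}" by (cases "even (i+j)") auto
      ultimately show ?thesis by auto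
    qed
  next
    case False
    have "(\<Sum>i<Suc k. M$$(i,j)) = 0" if j: "j < Suc k" for j
    proof -
      from False j obtain i1 i2 where
        "i1 < Suc k" "i2 < Suc k" "i1 \<noteq> i2" "M$$(i1,j) \<noteq> 0" "M$$(i2,j) \<noteq> 0"
        by blast
      then show ?thesis by (rule arc_incidence_mat_col_sum[OF Suc.prems j])
    qed
    then show ?thesis using det_eq_0_if_col_sums_zero[OF M] by simp
  qed
qed

section \<open>The matrix-tree theorem\<close>

lemma det_replace_last_row_by_col_sums:
  fixes A :: "'a::comm_ring_1 mat"
  assumes A: "A \<in> carrier_mat n n"
  shows "det (mat n n (\<lambda>(i,j). if i = n - 1 then \<Sum>k<n. A $$ (k,j) else A $$ (i,j))) = det A"
proof -
  define P :: "'a mat" where "P = mat n n (\<lambda>(i,j). if i = n - 1 \<or> i = j then 1 else 0)"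
  have P: "P \<in> carrier_mat n n" by (simp add: P_def)
  have "det P = prod_list (diag_mat P)"
    by (rule det_lower_triangular[OF _ P]) (auto simp: P_def)
  also have "\<dots> = 1" using prod_list_diag_prod[of P] by (simp add: P_def)
  finally have detP: "det P = 1" .
  have row: "(\<Sum>k\<in>{0..<n}. P $$ (i,k) * A $$ (k,j))
      = (if i = n - 1 then \<Sum>k<n. A $$ (k,j) else A $$ (i,j))" if i: "i < n" for i j
  proof (cases "i = n - 1")
    case True
    then show ?thesis by (simp add: P_def lessThan_atLeast0)
  next
    case False
    then have "(\<Sum>k\<in>{0..<n}. P $$ (i,k) * A $$ (k,j)) = (\<Sum>k\<in>{0..<n}. if k = i then A $$ (k,j) else 0)"
      using i by (intro sum.cong) (auto simp: P_def)
    then show ?thesis using i False by simp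
  qed
  have "P * A = mat n n (\<lambda>(i,j). if i = n - 1 then \<Sum>k<n. A $$ (k,j) else A $$ (i,j))"
    using A P by (intro eq_matI) (auto simp: scalar_prod_def row)
  then show ?thesis using det_mult[OF P A] detP by simp
qed

lemma det_sub_multiples_of_last_row:
  fixes A :: "'a::comm_ring_1 mat"
  assumes A: "A \<in> carrier_mat n n"
  shows "det (mat n n (\<lambda>(i,j). if i = n - 1 then A $$ (i,j) else A $$ (i,j) - c i * A $$ (n - 1, j)))
    = det A"
proof -
  define R :: "'a mat" where "R = mat n n (\<lambda>(i,j). if i = j then 1 else if j = n - 1 then - c i else 0)"
  have R: "R \<in> carrier_mat n n" by (simp add: R_def)
  have "det R = prod_list (diag_mat R)"
    by (rule det_upper_triangular[OF _ R]) (auto simp: R_def)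
  also have "\<dots> = 1" using prod_list_diag_prod[of R] by (simp add: R_def)
  finally have detR: "det R = 1" .
  have row: "(\<Sum>k\<in>{0..<n}. R $$ (i,k) * A $$ (k,j))
      = (if i = n - 1 then A $$ (i,j) else A $$ (i,j) - c i * A $$ (n - 1, j))"
    if "i < n" "j < n" for i j
  proof -
    have "(\<Sum>k\<in>{0..<n}. R $$ (i,k) * A $$ (k,j))
        = (\<Sum>k\<in>{0..<n}. (if k = i then A $$ (k,j) else 0)
            + (if k = n - 1 \<and> i \<noteq> n - 1 then - c i * A $$ (k,j) else 0))"
      using that by (intro sum.cong) (auto simp: R_def)
    also have "\<dots> = (if i = n - 1 then A $$ (i,j) else A $$ (i,j) - c i * A $$ (n - 1, j))"
      using that by (simp add: sum.distrib sum.delta)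
    finally show ?thesis .
  qed
  have "R * A = mat n n (\<lambda>(i,j). if i = n - 1 then A $$ (i,j) else A $$ (i,j) - c i * A $$ (n - 1, j))"
    using A R by (intro eq_matI) (auto simp: scalar_prod_def row)
  then show ?thesis using det_mult[OF R A] detR by simp
qed

text \<open>Replace the last row by the column sums (all equal to \<open>n\<close>), subtract \<open>1/n\<close> times it from the
  other rows to remove \<open>J\<close>, then replace the last column by the row sums, which vanish except in the
  corner.\<close>

lemma det_add_all_ones:
  fixes L :: "real mat"
  assumes L: "L \<in> carrier_mat n n" and n: "0 < n"
    and rows: "\<And>i. i < n \<Longrightarrow> (\<Sum>j<n. L $$ (i,j)) = 0"
    and cols: "\<And>j. j < n \<Longrightarrow> (\<Sum>i<n. L $$ (i,j)) = 0"
  shows "det (mat n n (\<lambda>(i,j). L $$ (i,j) + 1)) = real n ^ 2 * det (mat_delete L (n - 1) (n - 1))"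
proof -
  let ?r = "n - 1"
  define M1 where "M1 = mat n n (\<lambda>(i,j). if i = ?r then real n else L $$ (i,j) + 1)"
  define M2 where "M2 = mat n n (\<lambda>(i,j). if i = ?r then real n else L $$ (i,j))"
  define M3 where "M3 = mat n n (\<lambda>(i,j). if i = ?r then (if j = ?r then real n * real n else 0)
    else if j = ?r then real n else L $$ (j,i))"
  have LJ: "mat n n (\<lambda>(i,j). L $$ (i,j) + 1) \<in> carrier_mat n n" by simp
  have "mat n n (\<lambda>(i,j). if i = ?r then \<Sum>k<n. mat n n (\<lambda>(i,j). L $$ (i,j) + 1) $$ (k,j)
      else mat n n (\<lambda>(i,j). L $$ (i,j) + 1) $$ (i,j)) = M1"
    using L cols by (intro eq_matI) (auto simp: M1_def sum.distrib)
  then have "det (mat n n (\<lambda>(i,j). L $$ (i,j) + 1)) = det M1"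
    using det_replace_last_row_by_col_sums[OF LJ] by simp
  also have "mat n n (\<lambda>(i,j). if i = ?r then M1 $$ (i,j) else M1 $$ (i,j) - 1 / real n * M1 $$ (?r,j))
      = M2"
    using n by (intro eq_matI) (auto simp: M1_def M2_def)
  then have "det M1 = det M2"
    using det_sub_multiples_of_last_row[of M1 n "\<lambda>_. 1 / real n"] by (simp add: M1_def)
  also have "\<dots> = det (transpose_mat M2)" by (simp add: M2_def det_transpose[of _ n])
  also have "mat n n (\<lambda>(i,j). if i = ?r then \<Sum>k<n. transpose_mat M2 $$ (k,j)
      else transpose_mat M2 $$ (i,j)) = M3"
    using L rows n by (intro eq_matI) (auto simp: M2_def M3_def)
  then have "det (transpose_mat M2) = det M3"
    using det_replace_last_row_by_col_sums[of "transpose_mat M2" n] by (simp add: M2_def)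
  also have "\<dots> = real n ^ 2 * det (mat_delete M3 ?r ?r)"
  proof -
    have "det M3 = (\<Sum>j<n. M3 $$ (?r,j) * cofactor M3 ?r j)"
      using n by (intro laplace_expansion_row) (auto simp: M3_def)
    also have "\<dots> = (\<Sum>j\<in>{?r}. M3 $$ (?r,j) * cofactor M3 ?r j)"
      using n by (intro sum.mono_neutral_right) (auto simp: M3_def)
    finally show ?thesis using n by (simp add: M3_def cofactor_def power2_eq_square)
  qed
  also have "det (mat_delete M3 ?r ?r) = det (mat_delete L ?r ?r)"
  proof -
    have "mat_delete M3 ?r ?r = transpose_mat (mat_delete L ?r ?r)"
      using L by (intro eq_matI) (auto simp: M3_def mat_delete_def)
    then show ?thesis using det_transpose[of "mat_delete L ?r ?r" ?r] L by (simp add: mat_delete_def)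
  qed
  finally show ?thesis .
qed

lemma graph_edges_finite: "finite (graph_edges n H)"
  by (rule finite_subset[of _ "Pow {0..<n}"]) (auto simp: graph_edges_def)

lemma graph_edgeE:
  assumes sg: "simple_graph n H" and e: "e \<in> graph_edges n H"
  obtains a b where "a < b" "b < n" "e = {a,b}" "H a b"
proof -
  from e obtain i j where ij: "e = {i,j}" "i < n" "j < n" "i \<noteq> j" "H i j"
    unfolding graph_edges_def by blast
  have "H j i" using sg ij unfolding simple_graph_def by blast
  show ?thesis
  proof (cases "i < j")
    case True
    then show ?thesis using ij that by blast
  next
    case False
    then show ?thesis using ij \<open>H j i\<close> that[of j i] by (auto simp: insert_commute)
  qed
qed

lemma doubleton_in_graph_edges_iff:
  assumes sg: "simple_graph n H" and "i < n" "j < n" "i \<noteq> j"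
  shows "{i,j} \<in> graph_edges n H \<longleftrightarrow> H i j"
proof
  assume "{i,j} \<in> graph_edges n H"
  then obtain a b where ab: "a < b" "b < n" "{i,j} = {a,b}" "H a b" by (rule graph_edgeE[OF sg])
  then have "H b a" using sg unfolding simple_graph_def by auto
  then show "H i j" using ab by (auto simp: doubleton_eq_iff)
qed (use assms in \<open>auto simp: graph_edges_def\<close>)

lemma card_incident_edges:
  assumes sg: "simple_graph n H" and i: "i < n"
  shows "card {e \<in> graph_edges n H. i \<in> e} = degree n H i"
proof -
  have "bij_betw (\<lambda>j. {i,j}) {j. j < n \<and> H i j} {e \<in> graph_edges n H. i \<in> e}"
  proof (rule bij_betwI')
    fix x y assume "x \<in> {j. j < n \<and> H i j}" "y \<in> {j. j < n \<and> H i j}"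
    then have "x \<noteq> i" "y \<noteq> i" using sg i unfolding simple_graph_def by auto
    then show "({i,x} = {i,y}) = (x = y)" by (auto simp: doubleton_eq_iff)
  next
    fix x assume x: "x \<in> {j. j < n \<and> H i j}"
    then have "x \<noteq> i" using sg i unfolding simple_graph_def by auto
    then show "{i,x} \<in> {e \<in> graph_edges n H. i \<in> e}"
      using x i unfolding graph_edges_def by blast
  next
    fix e assume e: "e \<in> {e \<in> graph_edges n H. i \<in> e}"
    then obtain a b where ab: "a < b" "b < n" "e = {a,b}" "H a b" by (auto elim: graph_edgeE[OF sg])
    then have "H b a" using sg unfolding simple_graph_def by auto
    show "\<exists>x\<in>{j. j < n \<and> H i j}. e = {i,x}"
    proof (cases "i = a")
      case True
      then show ?thesis using ab by auto
    next
      case False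
      then have "i = b" using e ab by auto
      then show ?thesis using ab \<open>H b a\<close> by (intro bexI[of _ a]) (auto simp: insert_commute)
    qed
  qed
  then show ?thesis unfolding degree_def by (simp add: bij_betw_same_card)
qed

text \<open>Each edge \<open>{a, b}\<close> with \<open>a < b\<close> is oriented from \<open>a\<close> to \<open>b\<close>.\<close>

definition incidence_vec :: "nat set \<Rightarrow> nat \<Rightarrow> real" where
  "incidence_vec e i = (if i \<in> e then (if i = Min e then 1 else -1) else 0)"

lemma incidence_vec_doubleton:
  assumes "a < b"
  shows "incidence_vec {a,b} i = (if i = a then 1 else if i = b then -1 else 0)"
  using assms by (auto simp: incidence_vec_def)

text \<open>Rows are indexed by the vertices other than the last one \<open>n - 1\<close>, columns by the edge
  list \<open>es\<close>.\<close>

definition reduced_incidence_mat :: "nat \<Rightarrow> nat set list \<Rightarrow> real mat" where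
  "reduced_incidence_mat n es = mat (n - 1) (length es) (\<lambda>(i,k). incidence_vec (es ! k) i)"

lemma reduced_incidence_mat_carrier: "reduced_incidence_mat n es \<in> carrier_mat (n - 1) (length es)"
  by (simp add: reduced_incidence_mat_def)

lemma reduced_incidence_mat_mult_transpose:
  assumes sg: "simple_graph n H" and es: "distinct es" "set es = graph_edges n H"
  shows "reduced_incidence_mat n es * transpose_mat (reduced_incidence_mat n es)
    = mat_delete (laplacian n H) (n - 1) (n - 1)"
proof (rule eq_matI)
  fix i j assume "i < dim_row (mat_delete (laplacian n H) (n - 1) (n - 1))"
    "j < dim_col (mat_delete (laplacian n H) (n - 1) (n - 1))"
  then have i: "i < n - 1" and j: "j < n - 1" by (auto simp: mat_delete_def)
  have "(reduced_incidence_mat n es * transpose_mat (reduced_incidence_mat n es)) $$ (i,j)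
      = (\<Sum>k = 0..<length es. incidence_vec (es ! k) i * incidence_vec (es ! k) j)"
    using i j by (simp add: reduced_incidence_mat_def scalar_prod_def)
  also have "\<dots> = (\<Sum>e\<leftarrow>es. incidence_vec e i * incidence_vec e j)"
    by (simp add: sum_list_sum_nth)
  also have "\<dots> = (\<Sum>e\<in>graph_edges n H. incidence_vec e i * incidence_vec e j)"
    using es by (simp add: sum_list_distinct_conv_sum_set)
  also have "\<dots> = laplacian n H $$ (i,j)"
  proof (cases "i = j")
    case True
    have "(\<Sum>e\<in>graph_edges n H. incidence_vec e i * incidence_vec e j)
        = (\<Sum>e\<in>graph_edges n H. if i \<in> e then 1 else 0)"
      using True by (intro sum.cong) (auto simp: incidence_vec_def)
    also have "\<dots> = real (card {e \<in> graph_edges n H. i \<in> e})"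
      using sum.inter_filter[OF graph_edges_finite[of n H], of "\<lambda>_. 1::real" "\<lambda>e. i \<in> e"] by simp
    finally have "(\<Sum>e\<in>graph_edges n H. incidence_vec e i * incidence_vec e j)
        = real (card {e \<in> graph_edges n H. i \<in> e})" .
    then show ?thesis
      using True i sg by (simp add: card_incident_edges laplacian_index simple_graph_def)
  next
    case False
    have "(\<Sum>e\<in>graph_edges n H. incidence_vec e i * incidence_vec e j)
        = (\<Sum>e\<in>graph_edges n H. if e = {i,j} then -1 else 0)"
    proof (rule sum.cong[OF refl])
      fix e assume "e \<in> graph_edges n H"
      then obtain a b where "a < b" "e = {a,b}" by (rule graph_edgeE[OF sg])
      then show "incidence_vec e i * incidence_vec e j = (if e = {i,j} then -1 else 0)"
        using False by (auto simp: incidence_vec_doubleton doubleton_eq_iff)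
    qed
    also have "\<dots> = (if H i j then -1 else 0)"
      using graph_edges_finite doubleton_in_graph_edges_iff[OF sg, of i j] i j False
      by (simp add: sum.delta)
    finally show ?thesis using False i j by (simp add: laplacian_index)
  qed
  finally show "(reduced_incidence_mat n es * transpose_mat (reduced_incidence_mat n es)) $$ (i,j)
      = mat_delete (laplacian n H) (n - 1) (n - 1) $$ (i,j)"
    using i j by (simp add: mat_delete_def)
qed (auto simp: reduced_incidence_mat_def mat_delete_def)

lemma select_cols_reduced_incidence_mat_index:
  assumes "g j < length es" "i < n - 1" "i < m" "j < m"
  shows "select_cols m (reduced_incidence_mat n es) g $$ (i,j) = incidence_vec (es ! g j) i"
  using assms by (simp add: select_cols_def reduced_incidence_mat_def)

lemma arc_incidence_mat_select_cols:
  assumes sg: "simple_graph n H" and es: "set es = graph_edges n H"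
    and g: "\<And>j. j < n - 1 \<Longrightarrow> g j < length es"
  shows "arc_incidence_mat (n - 1) (select_cols (n - 1) (reduced_incidence_mat n es) g)"
  unfolding arc_incidence_mat_def
proof (intro conjI allI impI)
  let ?C = "select_cols (n - 1) (reduced_incidence_mat n es) g"
  have edge: "\<exists>a b. a < b \<and> es ! g j = {a,b}" if "j < n - 1" for j
  proof -
    have "es ! g j \<in> graph_edges n H" using g[OF that] es nth_mem by blast
    then obtain a b where "a < b" "es ! g j = {a,b}" by (rule graph_edgeE[OF sg])
    then show ?thesis by blast
  qed
  show "?C \<in> carrier_mat (n - 1) (n - 1)" by simp
  show "?C $$ (i,j) \<in> {-1,0,1}" if "i < n - 1" "j < n - 1" for i j
    using that g[of j] by (simp add: select_cols_reduced_incidence_mat_index incidence_vec_def)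
  have unique: "i1 = i2" if prems: "i1 < n - 1" "i2 < n - 1" "j < n - 1" "?C $$ (i1,j) = c"
    "?C $$ (i2,j) = c" "c \<in> {-1, 1}" for i1 i2 j and c :: real
  proof -
    obtain a b where ab: "a < b" "es ! g j = {a,b}" using edge[OF prems(3)] by blast
    have "incidence_vec {a,b} i1 = c" "incidence_vec {a,b} i2 = c"
      using prems(1-5) g[OF prems(3)] ab(2) by (simp_all add: select_cols_reduced_incidence_mat_index)
    then show ?thesis using ab(1) prems(6) by (auto simp: incidence_vec_doubleton split: if_splits)
  qed
  show "i1 = i2" if "i1 < n - 1" "i2 < n - 1" "j < n - 1" "?C $$ (i1,j) = 1" "?C $$ (i2,j) = 1"
    for i1 i2 j
    using unique[OF that] by simp
  show "i1 = i2" if "i1 < n - 1" "i2 < n - 1" "j < n - 1" "?C $$ (i1,j) = -1" "?C $$ (i2,j) = -1"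
    for i1 i2 j
    using unique[OF that] by simp
qed

text \<open>A vector indexed by the vertices other than \<open>n - 1\<close>, read as a potential vanishing at
  \<open>n - 1\<close>.\<close>

definition potential :: "nat \<Rightarrow> real vec \<Rightarrow> nat \<Rightarrow> real" where
  "potential m v u = (if u < m then v $ u else 0)"

lemma transpose_select_cols_mult_vec:
  assumes "g j < length es" "j < n - 1" "a < b" "es ! g j = {a,b}" "v \<in> carrier_vec (n - 1)"
  shows "(transpose_mat (select_cols (n - 1) (reduced_incidence_mat n es) g) *\<^sub>v v) $ j
    = potential (n - 1) v a - potential (n - 1) v b"
proof -
  let ?C = "select_cols (n - 1) (reduced_incidence_mat n es) g"
  have "(transpose_mat ?C *\<^sub>v v) $ j = (\<Sum>i\<in>{0..<n - 1}. ?C $$ (i,j) * v $ i)"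
    using assms by (simp add: scalar_prod_def)
  also have "\<dots> = (\<Sum>i\<in>{0..<n - 1}. (if i = a then v $ i else 0) - (if i = b then v $ i else 0))"
    using assms
    by (intro sum.cong refl) (simp add: select_cols_reduced_incidence_mat_index incidence_vec_doubleton)
  finally show ?thesis by (simp add: sum_subtractf potential_def)
qed

lemma edges_connected_imp_eq:
  assumes "edges_connected n T" "\<And>a b. {a,b} \<in> T \<Longrightarrow> f a = f b" "u < n" "w < n"
  shows "f u = f w"
proof -
  have "(\<lambda>a b. {a,b} \<in> T)\<^sup>*\<^sup>* u w" using assms(1,3,4) unfolding edges_connected_def by blast
  then show ?thesis by induct (use assms(2) in auto)
qed

text \<open>If \<open>T\<close> is not connected, the indicator of the vertices that cannot reach \<open>n - 1\<close> is a
  nonzero potential that is constant along the edges.\<close>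

lemma not_edges_connected_potential:
  assumes "\<not> edges_connected n T"
  shows "\<exists>v. v \<in> carrier_vec (n - 1) \<and> v \<noteq> 0\<^sub>v (n - 1) \<and>
    (\<forall>a b. {a,b} \<in> T \<longrightarrow> a < n \<longrightarrow> b < n \<longrightarrow> potential (n - 1) v a = potential (n - 1) v b)"
proof -
  let ?R = "\<lambda>a b. {a,b} \<in> T"
  have sym: "?R a b \<Longrightarrow> ?R b a" for a b by (simp add: insert_commute)
  have sym_rtc: "?R\<^sup>*\<^sup>* a b \<Longrightarrow> ?R\<^sup>*\<^sup>* b a" for a b
    by (rule sympD[OF symp_rtranclp]) (auto intro: sympI sym)
  have "\<exists>x<n. \<not> ?R\<^sup>*\<^sup>* x (n - 1)"
  proof (rule ccontr)
    assume "\<not> ?thesis"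
    then have reach: "?R\<^sup>*\<^sup>* x (n - 1)" if "x < n" for x using that by blast
    have "?R\<^sup>*\<^sup>* u w" if "u < n" "w < n" for u w
      using reach[OF that(1)] sym_rtc[OF reach[OF that(2)]] by (rule rtranclp_trans)
    then show False using assms unfolding edges_connected_def by blast
  qed
  then obtain x where x: "x < n" "\<not> ?R\<^sup>*\<^sup>* x (n - 1)" by blast
  then have x': "x < n - 1" by (cases "x = n - 1") auto
  define v where "v = vec (n - 1) (\<lambda>i. if ?R\<^sup>*\<^sup>* i (n - 1) then 0 else (1::real))"
  show ?thesis
  proof (intro exI conjI allI impI)
    show "v \<in> carrier_vec (n - 1)" by (simp add: v_def)
    show "v \<noteq> 0\<^sub>v (n - 1)"
    proof
      assume "v = 0\<^sub>v (n - 1)"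
      then have "v $ x = 0" using x' by simp
      then show False using x x' by (simp add: v_def)
    qed
    fix a b assume ab: "{a,b} \<in> T" "a < n" "b < n"
    have last: "?R\<^sup>*\<^sup>* u (n - 1)" if "u < n" "\<not> u < n - 1" for u
    proof -
      have "u = n - 1" using that by simp
      then show ?thesis by simp
    qed
    have "?R\<^sup>*\<^sup>* a (n - 1) \<longleftrightarrow> ?R\<^sup>*\<^sup>* b (n - 1)"
      using converse_rtranclp_into_rtranclp[of ?R a b "n - 1", OF ab(1)]
        converse_rtranclp_into_rtranclp[of ?R b a "n - 1", OF sym[OF ab(1)]]
      by blast
    then show "potential (n - 1) v a = potential (n - 1) v b"
      using ab(2,3) last[of a] last[of b] by (auto simp: potential_def v_def)
  qed
qed

lemma transpose_select_cols_mult_vec_eq_0_iff: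
  assumes sg: "simple_graph n H" and es: "set es = graph_edges n H"
    and g: "g ` {0..<n - 1} = S" and S: "S \<subseteq> {0..<length es}"
    and v: "v \<in> carrier_vec (n - 1)"
  shows "transpose_mat (select_cols (n - 1) (reduced_incidence_mat n es) g) *\<^sub>v v = 0\<^sub>v (n - 1)
    \<longleftrightarrow> (\<forall>a b. {a,b} \<in> (!) es ` S \<longrightarrow> potential (n - 1) v a = potential (n - 1) v b)"
    (is "?C *\<^sub>v v = _ \<longleftrightarrow> _")
proof -
  have gl: "g j < length es" if "j < n - 1" for j
  proof -
    have "g j \<in> S" using g that by auto
    then show ?thesis using S by auto
  qed
  have edge: "\<exists>a b. a < b \<and> es ! g j = {a,b}" if "j < n - 1" for j
  proof -
    have "es ! g j \<in> graph_edges n H" using gl[OF that] es nth_mem by blast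
    then obtain a b where "a < b" "es ! g j = {a,b}" by (rule graph_edgeE[OF sg])
    then show ?thesis by blast
  qed
  have entry: "(?C *\<^sub>v v) $ j = 0 \<longleftrightarrow> potential (n - 1) v a = potential (n - 1) v b"
    if "j < n - 1" "a < b" "es ! g j = {a,b}" for j a b
    using transpose_select_cols_mult_vec[where g = g and j = j and es = es and n = n and a = a
        and b = b and v = v] gl[OF that(1)] that v
    by simp
  show ?thesis
  proof
    assume zero: "?C *\<^sub>v v = 0\<^sub>v (n - 1)"
    show "\<forall>x y. {x,y} \<in> (!) es ` S \<longrightarrow> potential (n - 1) v x = potential (n - 1) v y"
    proof (intro allI impI)
      fix x y assume "{x,y} \<in> (!) es ` S"
      then obtain j where j: "j < n - 1" and xy: "es ! g j = {x,y}" using g by auto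
      obtain a b where ab: "a < b" "es ! g j = {a,b}" using edge[OF j] by blast
      have "(?C *\<^sub>v v) $ j = 0" using zero j by simp
      then have "potential (n - 1) v a = potential (n - 1) v b" using entry[OF j ab] by blast
      then show "potential (n - 1) v x = potential (n - 1) v y"
        using ab(2) xy by (auto simp: doubleton_eq_iff)
    qed
  next
    assume const: "\<forall>x y. {x,y} \<in> (!) es ` S \<longrightarrow> potential (n - 1) v x = potential (n - 1) v y"
    show "?C *\<^sub>v v = 0\<^sub>v (n - 1)"
    proof (rule eq_vecI)
      fix j assume "j < dim_vec (0\<^sub>v (n - 1) :: real vec)"
      then have j: "j < n - 1" by simp
      obtain a b where ab: "a < b" "es ! g j = {a,b}" using edge[OF j] by blast
      have "{a,b} \<in> (!) es ` S" using ab(2) g j by force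
      then have "(?C *\<^sub>v v) $ j = 0" using entry[OF j ab] const by blast
      then show "(?C *\<^sub>v v) $ j = 0\<^sub>v (n - 1) $ j" using j by simp
    qed simp
  qed
qed

text \<open>The columns selected by \<open>g\<close> form a basis exactly when the selected edges connect the
  graph: the kernel of the transposed submatrix consists of the potentials constant along them.\<close>

lemma det_select_cols_reduced_incidence_mat:
  assumes sg: "simple_graph n H" and n: "0 < n" and es: "set es = graph_edges n H"
    and g: "g ` {0..<n - 1} = S" and S: "S \<subseteq> {0..<length es}"
  shows "det (select_cols (n - 1) (reduced_incidence_mat n es) g) \<noteq> 0
    \<longleftrightarrow> edges_connected n ((!) es ` S)"
proof -
  let ?C = "select_cols (n - 1) (reduced_incidence_mat n es) g"
  let ?P = "\<lambda>v. \<forall>a b. {a,b} \<in> (!) es ` S \<longrightarrow> potential (n - 1) v a = potential (n - 1) v b"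
  have in_range: "a < n \<and> b < n" if "{a,b} \<in> (!) es ` S" for a b
  proof -
    have "{a,b} \<in> graph_edges n H" using that S es[symmetric] by (auto intro: nth_mem)
    then obtain x y where "x < y" "y < n" "{a,b} = {x,y}" by (rule graph_edgeE[OF sg])
    then show ?thesis by (auto simp: doubleton_eq_iff)
  qed
  have "det ?C = 0 \<longleftrightarrow> (\<exists>v. v \<in> carrier_vec (n - 1) \<and> v \<noteq> 0\<^sub>v (n - 1)
      \<and> transpose_mat ?C *\<^sub>v v = 0\<^sub>v (n - 1))"
    using det_0_iff_vec_prod_zero_field[of "transpose_mat ?C" "n - 1"]
    by (simp add: det_transpose[of _ "n - 1"])
  also have "\<dots> \<longleftrightarrow> (\<exists>v. v \<in> carrier_vec (n - 1) \<and> v \<noteq> 0\<^sub>v (n - 1) \<and> ?P v)"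
    using transpose_select_cols_mult_vec_eq_0_iff[OF sg es g S] by (intro ex_cong1) auto
  also have "\<dots> \<longleftrightarrow> \<not> edges_connected n ((!) es ` S)"
  proof
    assume "\<exists>v. v \<in> carrier_vec (n - 1) \<and> v \<noteq> 0\<^sub>v (n - 1) \<and> ?P v"
    then obtain v where v: "v \<in> carrier_vec (n - 1)" "v \<noteq> 0\<^sub>v (n - 1)" "?P v" by blast
    show "\<not> edges_connected n ((!) es ` S)"
    proof
      assume con: "edges_connected n ((!) es ` S)"
      have "v $ i = 0" if "i < n - 1" for i
        using edges_connected_imp_eq[OF con, of "potential (n - 1) v" i "n - 1"] v(3) that n
        by (simp add: potential_def)
      then have "v = 0\<^sub>v (n - 1)" using v(1) by (intro eq_vecI) auto
      then show False using v(2) by simp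
    qed
  next
    assume "\<not> edges_connected n ((!) es ` S)"
    from not_edges_connected_potential[OF this] obtain v where "v \<in> carrier_vec (n - 1)"
      "v \<noteq> 0\<^sub>v (n - 1)"
      "\<forall>a b. {a,b} \<in> (!) es ` S \<longrightarrow> a < n \<longrightarrow> b < n \<longrightarrow> potential (n - 1) v a = potential (n - 1) v b"
      by blast
    then show "\<exists>v. v \<in> carrier_vec (n - 1) \<and> v \<noteq> 0\<^sub>v (n - 1) \<and> ?P v"
      using in_range by blast
  qed
  finally show ?thesis by blast
qed

lemma card_connected_index_sets:
  assumes es: "distinct es" "set es = graph_edges n H"
  shows "card {S. (S \<subseteq> {0..<length es} \<and> card S = n - 1) \<and> edges_connected n ((!) es ` S)}
    = num_spanning_trees n H"
proof -
  let ?I = "{S. (S \<subseteq> {0..<length es} \<and> card S = n - 1) \<and> edges_connected n ((!) es ` S)}"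
  have inj: "inj_on ((!) es) {0..<length es}" using es(1) by (simp add: inj_on_nth)
  have "bij_betw ((`) ((!) es)) ?I {T. spanning_tree n H T}"
  proof (rule bij_betwI')
    fix S1 S2 assume "S1 \<in> ?I" "S2 \<in> ?I"
    then show "((!) es ` S1 = (!) es ` S2) = (S1 = S2)"
      using inj_on_image_eq_iff[OF inj] by auto
  next
    fix S assume S: "S \<in> ?I"
    then have "(!) es ` S \<subseteq> graph_edges n H" using es(2)[symmetric] by (auto intro: nth_mem)
    moreover have "card ((!) es ` S) = n - 1"
      using S card_image[OF inj_on_subset[OF inj]] by auto
    ultimately show "(!) es ` S \<in> {T. spanning_tree n H T}"
      using S unfolding spanning_tree_def by auto
  next
    fix T assume T: "T \<in> {T. spanning_tree n H T}"
    define S where "S = {k \<in> {0..<length es}. es ! k \<in> T}"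
    have TS: "(!) es ` S = T"
    proof
      show "(!) es ` S \<subseteq> T" unfolding S_def by auto
      show "T \<subseteq> (!) es ` S"
      proof
        fix t assume t: "t \<in> T"
        then have "t \<in> set es" using T es(2) unfolding spanning_tree_def by auto
        then obtain k where "k < length es" "es ! k = t" by (auto simp: in_set_conv_nth)
        then show "t \<in> (!) es ` S" unfolding S_def using t by auto
      qed
    qed
    moreover have SN: "S \<subseteq> {0..<length es}" by (auto simp: S_def)
    moreover have "card ((!) es ` S) = card S"
      by (rule card_image[OF inj_on_subset[OF inj SN]])
    ultimately show "\<exists>S\<in>?I. T = (!) es ` S"
      using T unfolding spanning_tree_def by (intro bexI[of _ S]) auto
  qed
  then show ?thesis unfolding num_spanning_trees_def by (rule bij_betw_same_card)
qed

theorem matrix_tree: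
  assumes sg: "simple_graph n H" and n: "0 < n"
  shows "det (mat_delete (laplacian n H) (n - 1) (n - 1)) = real (num_spanning_trees n H)"
proof -
  obtain es where es: "distinct es" "set es = graph_edges n H"
    using finite_distinct_list[OF graph_edges_finite] by blast
  let ?A = "reduced_incidence_mat n es"
  let ?SS = "{S. S \<subseteq> {0..<length es} \<and> card S = n - 1}"
  let ?sel = "\<lambda>S. select_cols (n - 1) ?A ((!) (sorted_list_of_set S))"
  have sel: "det (?sel S) ^ 2 = (if edges_connected n ((!) es ` S) then 1 else 0)" if S: "S \<in> ?SS" for S
  proof -
    have fin: "finite S" using S by (auto intro: finite_subset)
    have "(!) (sorted_list_of_set S) ` {0..<length (sorted_list_of_set S)} = set (sorted_list_of_set S)"
      by (auto simp: in_set_conv_nth)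
    then have img: "(!) (sorted_list_of_set S) ` {0..<n - 1} = S"
      using S fin by simp
    have "arc_incidence_mat (n - 1) (?sel S)"
    proof (rule arc_incidence_mat_select_cols[OF sg es(2)])
      fix j assume "j < n - 1"
      then have "sorted_list_of_set S ! j \<in> (!) (sorted_list_of_set S) ` {0..<n - 1}" by simp
      then show "sorted_list_of_set S ! j < length es" using img S by auto
    qed
    then have "det (?sel S) \<in> {-1, 0, 1}" by (rule det_arc_incidence_mat)
    moreover have "det (?sel S) \<noteq> 0 \<longleftrightarrow> edges_connected n ((!) es ` S)"
      using S by (intro det_select_cols_reduced_incidence_mat[OF sg n es(2) img]) auto
    ultimately show ?thesis by auto
  qed
  have "det (mat_delete (laplacian n H) (n - 1) (n - 1)) = det (?A * transpose_mat ?A)"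
    by (simp add: reduced_incidence_mat_mult_transpose[OF sg es])
  also have "\<dots> = (\<Sum>S\<in>?SS. det (?sel S) * det (?sel S))"
    by (rule cauchy_binet[OF reduced_incidence_mat_carrier reduced_incidence_mat_carrier])
  also have "\<dots> = (\<Sum>S\<in>?SS. if edges_connected n ((!) es ` S) then 1 else 0)"
  proof (rule sum.cong[OF refl])
    fix S assume "S \<in> ?SS"
    then show "det (?sel S) * det (?sel S) = (if edges_connected n ((!) es ` S) then 1 else 0)"
      using sel[of S] by (simp add: power2_eq_square)
  qed
  also have "\<dots> = (\<Sum>S\<in>{S \<in> ?SS. edges_connected n ((!) es ` S)}. 1)"
    by (rule sum.inter_filter[symmetric]) (rule finite_subset[of _ "Pow {0..<length es}"], auto)
  also have "\<dots> = real (num_spanning_trees n H)"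
    using card_connected_index_sets[OF es] by (simp add: conj_assoc)
  finally show ?thesis .
qed

lemma simple_graph_complement:
  "simple_graph n E \<Longrightarrow> simple_graph n (complement_graph E)"
  unfolding simple_graph_def complement_graph_def by auto

lemma degree_add_degree_complement:
  assumes sg: "simple_graph n E" and i: "i < n"
  shows "degree n E i + degree n (complement_graph E) i = n - 1"
proof -
  have "{j. j < n \<and> E i j} \<union> {j. j < n \<and> complement_graph E i j} = {0..<n} - {i}"
    using sg i unfolding complement_graph_def simple_graph_def by auto
  moreover have "{j. j < n \<and> E i j} \<inter> {j. j < n \<and> complement_graph E i j} = {}"
    unfolding complement_graph_def by auto
  ultimately have "degree n E i + degree n (complement_graph E) i = card ({0..<n} - {i})"
    unfolding degree_def by (simp add: card_Un_disjoint[symmetric])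
  then show ?thesis using i by simp
qed

text \<open>\<open>L(G) + L(complement G) = n I - J\<close> for every simple graph \<open>G\<close>.\<close>

lemma n_minus_laplacian_eq:
  assumes sg: "simple_graph n E"
  shows "real n \<cdot>\<^sub>m 1\<^sub>m n - laplacian n E
    = mat n n (\<lambda>(i,j). laplacian n (complement_graph E) $$ (i,j) + 1)"
proof (rule eq_matI)
  fix i j assume "i < dim_row (mat n n (\<lambda>(i,j). laplacian n (complement_graph E) $$ (i,j) + 1))"
    "j < dim_col (mat n n (\<lambda>(i,j). laplacian n (complement_graph E) $$ (i,j) + 1))"
  then have i: "i < n" and j: "j < n" by auto
  have "real (degree n E i) + real (degree n (complement_graph E) i) = real n - 1"
    using degree_add_degree_complement[OF sg i] i by linarith
  then show "(real n \<cdot>\<^sub>m 1\<^sub>m n - laplacian n E) $$ (i,j)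
      = mat n n (\<lambda>(i,j). laplacian n (complement_graph E) $$ (i,j) + 1) $$ (i,j)"
    using sg i j by (auto simp: laplacian_index complement_graph_def simple_graph_def)
qed auto

lemma det_n_minus_laplacian:
  assumes sg: "simple_graph n E" and n: "0 < n"
  shows "det (real n \<cdot>\<^sub>m 1\<^sub>m n - laplacian n E)
    = real n ^ 2 * real (num_spanning_trees n (complement_graph E))"
proof -
  let ?H = "complement_graph E"
  have sgH: "simple_graph n ?H" by (rule simple_graph_complement[OF sg])
  have cols: "(\<Sum>i<n. laplacian n ?H $$ (i,j)) = 0" if j: "j < n" for j
  proof -
    have "(\<Sum>i<n. laplacian n ?H $$ (i,j)) = (\<Sum>i<n. laplacian n ?H $$ (j,i))"
      using laplacian_symmetric[OF sgH _ j] by (intro sum.cong refl) simp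
    then show ?thesis using laplacian_row_sum[OF sgH j] by simp
  qed
  have "det (real n \<cdot>\<^sub>m 1\<^sub>m n - laplacian n E) = det (mat n n (\<lambda>(i,j). laplacian n ?H $$ (i,j) + 1))"
    by (simp only: n_minus_laplacian_eq[OF sg])
  also have "\<dots> = real n ^ 2 * det (mat_delete (laplacian n ?H) (n - 1) (n - 1))"
    by (rule det_add_all_ones[OF laplacian_carrier n laplacian_row_sum[OF sgH] cols])
  also have "det (mat_delete (laplacian n ?H) (n - 1) (n - 1)) = real (num_spanning_trees n ?H)"
    by (rule matrix_tree[OF sgH n])
  finally show ?thesis .
qed

section \<open>Power sums and the logarithmic series\<close>

definition power_sum :: "real list \<Rightarrow> nat \<Rightarrow> real" where
  "power_sum xs k = (\<Sum>x\<leftarrow>xs. x ^ k)"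

lemma power_sum_nonneg: "(\<And>x. x \<in> set xs \<Longrightarrow> 0 \<le> x) \<Longrightarrow> 0 \<le> power_sum xs k"
  unfolding power_sum_def by (induct xs) auto

lemma power_le_power_sum:
  assumes "\<And>x. x \<in> set xs \<Longrightarrow> 0 \<le> x" and "y \<in> set xs"
  shows "y ^ k \<le> power_sum xs k"
  using assms
proof (induct xs)
  case (Cons x xs)
  have "0 \<le> x ^ k" "0 \<le> power_sum xs k"
    using Cons.prems(1) by (auto intro: power_sum_nonneg)
  moreover have "y ^ k \<le> power_sum xs k" if "y \<noteq> x"
    using Cons that by auto
  ultimately show ?case
    by (cases "y = x") (auto simp: power_sum_def)
qed simp

lemma lt_of_power_sum_lt:
  assumes "\<And>x. x \<in> set xs \<Longrightarrow> 0 \<le> x" and "y \<in> set xs"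
    and "power_sum xs m < c ^ m" and "0 \<le> c"
  shows "y < c"
proof -
  have "y ^ m \<le> power_sum xs m" using assms(1,2) by (intro power_le_power_sum) auto
  then have "y ^ m < c ^ m" using assms(3) by linarith
  then show ?thesis using assms(4) by (rule power_less_imp_less_base)
qed

lemma power_sum_map_divide:
  fixes c :: real
  shows "power_sum (map (\<lambda>x. x / c) xs) k = power_sum xs k / c ^ k"
  unfolding power_sum_def by (induct xs) (auto simp: power_divide add_divide_distrib)

lemma power_sum_le_pow_mult:
  assumes "\<And>x. x \<in> set xs \<Longrightarrow> 0 \<le> x \<and> x \<le> M" and "m \<le> k"
  shows "power_sum xs k \<le> M ^ (k - m) * power_sum xs m"
proof -
  have "power_sum xs k = (\<Sum>x\<leftarrow>xs. x ^ m * x ^ (k - m))"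
    unfolding power_sum_def using assms(2)
    by (intro arg_cong[where f=sum_list] map_cong) (auto simp: power_add[symmetric])
  also have "\<dots> \<le> (\<Sum>x\<leftarrow>xs. x ^ m * M ^ (k - m))"
    by (rule sum_list_mono) (use assms(1) in \<open>auto intro!: mult_left_mono power_mono\<close>)
  also have "\<dots> = M ^ (k - m) * power_sum xs m"
    unfolding power_sum_def by (induct xs) (auto simp: algebra_simps)
  finally show ?thesis .
qed

lemma power_sum_tendsto_zero:
  assumes "\<And>x. x \<in> set xs \<Longrightarrow> \<bar>x\<bar> < 1"
  shows "power_sum xs \<longlonglongrightarrow> 0"
  using assms unfolding power_sum_def
  by (induct xs) (auto intro!: tendsto_add_zero LIMSEQ_power_zero)

lemma powr_inverse_pow:
  fixes a :: real assumes "0 \<le> a" "0 < m"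
  shows "(a powr (1 / real m)) ^ m = a"
  using assms by (simp add: powr_realpow'[symmetric] powr_powr)

lemma pow_powr_inverse:
  fixes a :: real assumes "0 \<le> a" "0 < m"
  shows "(a ^ m) powr (1 / real m) = a"
  using assms by (simp add: powr_realpow'[symmetric] powr_powr)

lemma le_root_power_sum:
  assumes "\<And>x. x \<in> set xs \<Longrightarrow> 0 \<le> x" and "y \<in> set xs" and "0 < m"
  shows "y \<le> power_sum xs m powr (1 / real m)"
proof -
  have "y = (y ^ m) powr (1 / real m)" using assms by (simp add: pow_powr_inverse)
  also have "\<dots> \<le> power_sum xs m powr (1 / real m)"
    using assms by (intro powr_mono2 power_le_power_sum) auto
  finally show ?thesis .
qed

lemma root_power_sum_tendsto_Max:
  assumes nonneg: "\<And>x. x \<in> set xs \<Longrightarrow> 0 \<le> x"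
  shows "(\<lambda>m. power_sum xs m powr (1 / real m)) \<longlonglongrightarrow> Max (insert 0 (set xs))"
proof -
  define X where "X = Max (insert 0 (set xs))"
  define N where "N = real (length xs) + 1"
  have X0: "0 \<le> X" and xX: "\<And>x. x \<in> set xs \<Longrightarrow> x \<le> X" unfolding X_def by auto
  have N: "0 < N" unfolding N_def by simp
  have upper: "power_sum xs m powr (1 / real m) \<le> N powr (1 / real m) * X" if "0 < m" for m
  proof -
    have "power_sum xs m \<le> (\<Sum>x\<leftarrow>xs. X ^ m)"
      unfolding power_sum_def by (rule sum_list_mono) (use nonneg xX in \<open>auto intro!: power_mono\<close>)
    also have "\<dots> \<le> N * X ^ m" using X0 by (simp add: sum_list_triv N_def algebra_simps)
    finally have "power_sum xs m powr (1 / real m) \<le> (N * X ^ m) powr (1 / real m)"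
      by (intro powr_mono2) (auto intro: power_sum_nonneg nonneg)
    also have "\<dots> = N powr (1 / real m) * X"
      using N X0 that by (simp add: powr_mult pow_powr_inverse)
    finally show ?thesis .
  qed
  have lower: "X \<le> power_sum xs m powr (1 / real m)" if "0 < m" for m
  proof (cases "X = 0")
    case False
    then have "X \<in> set xs" unfolding X_def using Max_in[of "insert 0 (set xs)"] by auto
    then show ?thesis using le_root_power_sum[OF nonneg _ that] by blast
  qed simp
  have "(\<lambda>m. N powr (1 / real m) * X) \<longlonglongrightarrow> N powr 0 * X"
    by (intro tendsto_intros) (use N lim_inverse_n' in auto)
  then have upper_lim: "(\<lambda>m. N powr (1 / real m) * X) \<longlonglongrightarrow> X" using N by simp
  have pos: "eventually (\<lambda>m. 0 < m) sequentially" by (rule eventually_gt_at_top)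
  show ?thesis unfolding X_def[symmetric]
  proof (rule real_tendsto_sandwich[OF _ _ tendsto_const upper_lim])
    show "eventually (\<lambda>m. X \<le> power_sum xs m powr (1 / real m)) sequentially"
      using pos by eventually_elim (rule lower)
    show "eventually (\<lambda>m. power_sum xs m powr (1 / real m) \<le> N powr (1 / real m) * X) sequentially"
      using pos by eventually_elim (rule upper)
  qed
qed

lemma sums_minus_ln_one_minus:
  fixes y :: real assumes "\<bar>y\<bar> < 1"
  shows "(\<lambda>k. y ^ k / real k) sums (- ln (1 - y))"
proof -
  have "(\<lambda>k. - ((- (- y)) ^ k) / real k) sums ln (1 + - y)"
    by (rule ln_series') (use assms in auto)
  then show ?thesis using sums_minus by fastforce
qed

lemma power_sum_sums:
  assumes "\<And>x. x \<in> set xs \<Longrightarrow> \<bar>x\<bar> < 1"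
  shows "(\<lambda>k. power_sum xs k / real k) sums (- (\<Sum>x\<leftarrow>xs. ln (1 - x)))"
  using assms
proof (induct xs)
  case Nil
  then show ?case by (simp add: power_sum_def)
next
  case (Cons x xs)
  have "(\<lambda>k. x ^ k / real k + power_sum xs k / real k) sums (- ln (1 - x) + - (\<Sum>x\<leftarrow>xs. ln (1 - x)))"
    using Cons by (intro sums_add sums_minus_ln_one_minus) auto
  then show ?case by (simp add: power_sum_def add_divide_distrib)
qed

lemma prod_one_minus_eq_exp:
  fixes xs :: "real list"
  assumes "\<And>x. x \<in> set xs \<Longrightarrow> x < 1"
  shows "(\<Prod>x\<leftarrow>xs. 1 - x) = exp (\<Sum>x\<leftarrow>xs. ln (1 - x))"
  using assms
proof (induct xs)
  case (Cons x xs)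
  have "0 < 1 - x" using Cons.prems[of x] by simp
  with Cons show ?case by (simp add: exp_add)
qed simp

text \<open>The remainder of the series \<open>-ln (1 - y) = \<Sum>k\<ge>1. y\<^sup>k / k\<close> after its first \<open>m\<close> terms.\<close>

definition ln_tail :: "real \<Rightarrow> nat \<Rightarrow> real" where
  "ln_tail y m = (\<Sum>j. y ^ (j + m) / real (j + m))"

lemma ln_tail_sums:
  assumes "\<bar>y\<bar> < 1"
  shows "(\<lambda>j. y ^ (j + m) / real (j + m)) sums ln_tail y m"
  using sums_minus_ln_one_minus[OF assms, THEN sums_split_initial_segment[where n = m]]
  by (simp add: ln_tail_def sums_iff)

lemma ln_tail_bounds:
  fixes y :: real assumes "0 \<le> y" "y < 1" "0 < m"
  shows "0 \<le> ln_tail y m" "ln_tail y m \<le> y ^ m / (1 - y)"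
proof -
  have tail: "(\<lambda>j. y ^ (j + m) / real (j + m)) sums ln_tail y m"
    by (rule ln_tail_sums) (use assms in auto)
  have geom: "(\<lambda>j. y ^ m * y ^ j) sums (y ^ m / (1 - y))"
    using sums_mult[OF geometric_sums, of y "y ^ m"] assms by (simp add: divide_inverse)
  show "0 \<le> ln_tail y m"
    by (rule sums_le[OF _ sums_zero tail]) (use assms in auto)
  show "ln_tail y m \<le> y ^ m / (1 - y)"
  proof (rule sums_le[OF _ tail geom])
    fix j
    have "y ^ (j + m) / real (j + m) \<le> y ^ (j + m) / 1"
      by (rule divide_left_mono) (use assms in auto)
    then show "y ^ (j + m) / real (j + m) \<le> y ^ m * y ^ j" by (simp add: power_add mult.commute)
  qed
qed

lemma prod_one_minus_eq_exp_tail: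
  assumes "\<And>x. x \<in> set xs \<Longrightarrow> \<bar>x\<bar> < 1"
  shows "(\<Prod>x\<leftarrow>xs. 1 - x)
    = exp (- (\<Sum>k<m. power_sum xs k / real k) - (\<Sum>j. power_sum xs (j + m) / real (j + m)))"
proof -
  have "(\<lambda>j. power_sum xs (j + m) / real (j + m))
      sums (- (\<Sum>x\<leftarrow>xs. ln (1 - x)) - (\<Sum>k<m. power_sum xs k / real k))"
    using power_sum_sums[OF assms, THEN sums_split_initial_segment[where n = m]] by simp
  then show ?thesis
    using prod_one_minus_eq_exp[of xs] assms by (simp add: sums_iff abs_less_iff)
qed

lemma exp_ln_tail:
  fixes M :: real assumes "0 \<le> M" "M < 1"
  shows "(1 - M) * exp (- (\<Sum>k = 1..<m. (power_sum xs k - M ^ k) / real k))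
     = exp (- (\<Sum>k<m. power_sum xs k / real k) - ln_tail M m)"
proof -
  have "(\<lambda>j. M ^ (j + m) / real (j + m)) sums (- ln (1 - M) - (\<Sum>k<m. M ^ k / real k))"
    using sums_minus_ln_one_minus[of M, THEN sums_split_initial_segment[where n = m]] assms by simp
  then have tail: "ln_tail M m = - ln (1 - M) - (\<Sum>k<m. M ^ k / real k)"
    using ln_tail_sums[of M m] assms by (simp add: sums_iff)
  have "(\<Sum>k = 1..<m. (power_sum xs k - M ^ k) / real k) = (\<Sum>k<m. (power_sum xs k - M ^ k) / real k)"
    by (rule sum.mono_neutral_left) auto
  then have sum: "(\<Sum>k = 1..<m. (power_sum xs k - M ^ k) / real k)
      = (\<Sum>k<m. power_sum xs k / real k) - (\<Sum>k<m. M ^ k / real k)"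
    by (simp add: sum_subtractf diff_divide_distrib)
  have "(1 - M) * exp (- (\<Sum>k = 1..<m. (power_sum xs k - M ^ k) / real k))
      = exp (ln (1 - M)) * exp (- (\<Sum>k = 1..<m. (power_sum xs k - M ^ k) / real k))"
    using assms by simp
  also have "\<dots> = exp (ln (1 - M) + - (\<Sum>k = 1..<m. (power_sum xs k - M ^ k) / real k))"
    by (rule exp_add[symmetric])
  also have "ln (1 - M) + - (\<Sum>k = 1..<m. (power_sum xs k - M ^ k) / real k)
      = - (\<Sum>k<m. power_sum xs k / real k) - ln_tail M m"
    unfolding sum tail by simp
  finally show ?thesis .
qed

definition prod_lower_bound :: "real list \<Rightarrow> nat \<Rightarrow> real" where
  "prod_lower_bound xs m =
    (let M = power_sum xs m powr (1 / real m)
     in (1 - M) * exp (- (\<Sum>k = 1..<m. (power_sum xs k - M ^ k) / real k)))"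

text \<open>With \<open>M\<^sup>m = p\<^sub>m\<close>, the bound and the product differ only in their tails
  \<open>\<Sum>k\<ge>m. M\<^sup>k / k\<close> and \<open>\<Sum>k\<ge>m. p\<^sub>k / k\<close>, and \<open>p\<^sub>k \<le> M\<^sup>k\<close> for \<open>k \<ge> m\<close>.\<close>

lemma prod_lower_bound_le:
  assumes xs: "\<And>x. x \<in> set xs \<Longrightarrow> 0 \<le> x \<and> x < 1" and m: "0 < m"
  shows "prod_lower_bound xs m \<le> (\<Prod>x\<leftarrow>xs. 1 - x)"
proof -
  define M where "M = power_sum xs m powr (1 / real m)"
  have pm: "power_sum xs m = M ^ m"
    unfolding M_def using xs m by (simp add: powr_inverse_pow power_sum_nonneg)
  have xM: "x \<le> M" if "x \<in> set xs" for x
    unfolding M_def using le_root_power_sum[OF _ that m] xs by blast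
  have prod_nonneg: "0 \<le> (\<Prod>x\<leftarrow>xs. 1 - x)"
    using xs by (intro prod_list_nonneg) (auto simp: less_imp_le)
  show ?thesis
  proof (cases "M < 1")
    case False
    then have "(1 - M) * exp (- (\<Sum>k = 1..<m. (power_sum xs k - M ^ k) / real k)) \<le> 0"
      by (intro mult_nonpos_nonneg) auto
    then show ?thesis
      using prod_nonneg by (simp add: prod_lower_bound_def M_def[symmetric])
  next
    case True
    have M0: "0 \<le> M" unfolding M_def by simp
    have xs1: "\<And>x. x \<in> set xs \<Longrightarrow> \<bar>x\<bar> < 1" using xs by fastforce
    have "(\<Sum>j. power_sum xs (j + m) / real (j + m)) \<le> ln_tail M m"
    proof (rule sums_le[OF _ _ ln_tail_sums])
      show "(\<lambda>j. power_sum xs (j + m) / real (j + m)) sums (\<Sum>j. power_sum xs (j + m) / real (j + m))"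
        using power_sum_sums[OF xs1, THEN sums_split_initial_segment[where n = m]]
        by (simp add: sums_iff)
      show "power_sum xs (j + m) / real (j + m) \<le> M ^ (j + m) / real (j + m)" for j
        using power_sum_le_pow_mult[of xs M m "j + m"] xs xM
        by (intro divide_right_mono) (auto simp: pm power_add[symmetric])
    qed (use M0 True in auto)
    then show ?thesis
      unfolding prod_lower_bound_def M_def[symmetric] Let_def exp_ln_tail[OF M0 True]
      using prod_one_minus_eq_exp_tail[OF xs1, where m = m] by simp
  qed
qed

lemma eventually_root_power_sum_less_one:
  assumes xs: "\<And>x. x \<in> set xs \<Longrightarrow> 0 \<le> x \<and> x < 1"
  shows "eventually (\<lambda>m. 0 < m \<and> power_sum xs m powr (1 / real m) < 1) sequentially"
proof -
  have X1: "Max (insert 0 (set xs)) < 1" using xs by simp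
  have "(\<lambda>m. power_sum xs m powr (1 / real m)) \<longlonglongrightarrow> Max (insert 0 (set xs))"
    by (rule root_power_sum_tendsto_Max) (use xs in blast)
  from order_tendstoD(2)[OF this X1] eventually_gt_at_top[of 0]
  show ?thesis by eventually_elim simp
qed

lemma ln_tail_root_power_sum_tendsto_zero:
  assumes xs: "\<And>x. x \<in> set xs \<Longrightarrow> 0 \<le> x \<and> x < 1"
  shows "(\<lambda>m. ln_tail (power_sum xs m powr (1 / real m)) m) \<longlonglongrightarrow> 0"
proof -
  define M where "M m = power_sum xs m powr (1 / real m)" for m
  define X where "X = Max (insert 0 (set xs))"
  have X1: "X < 1" unfolding X_def using xs by simp
  have M0: "0 \<le> M m" for m unfolding M_def by simp
  have Mpow: "M m ^ m = power_sum xs m" if "0 < m" for m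
    unfolding M_def by (rule powr_inverse_pow[OF power_sum_nonneg that]) (use xs in blast)
  have M: "M \<longlonglongrightarrow> X"
    unfolding M_def X_def by (rule root_power_sum_tendsto_Max) (use xs in blast)
  have ev: "eventually (\<lambda>m. 0 < m \<and> M m < 1) sequentially"
    unfolding M_def by (rule eventually_root_power_sum_less_one[OF xs])
  have "(\<lambda>m. ln_tail (M m) m) \<longlonglongrightarrow> 0"
  proof (rule real_tendsto_sandwich[OF _ _ tendsto_const])
    show "eventually (\<lambda>m. 0 \<le> ln_tail (M m) m) sequentially"
      using ev by eventually_elim (blast intro: ln_tail_bounds(1) M0)
    show "eventually (\<lambda>m. ln_tail (M m) m \<le> power_sum xs m / (1 - M m)) sequentially"
      using ev by eventually_elim (metis Mpow ln_tail_bounds(2) M0)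
    have "(\<lambda>m. power_sum xs m / (1 - M m)) \<longlonglongrightarrow> 0 / (1 - X)"
      using X1 xs by (intro tendsto_intros power_sum_tendsto_zero M) (auto simp: abs_less_iff)
    then show "(\<lambda>m. power_sum xs m / (1 - M m)) \<longlonglongrightarrow> 0" by simp
  qed
  then show ?thesis by (simp add: M_def)
qed

text \<open>By \<open>exp_ln_tail\<close>, the bound is \<open>exp (- (\<Sum>k<m. p\<^sub>k / k) - ln_tail M m)\<close>, whose first sum
  converges to \<open>-\<Sum> ln (1 - x)\<close> while the tail vanishes.\<close>

lemma prod_lower_bound_tendsto:
  assumes xs: "\<And>x. x \<in> set xs \<Longrightarrow> 0 \<le> x \<and> x < 1"
  shows "prod_lower_bound xs \<longlonglongrightarrow> (\<Prod>x\<leftarrow>xs. 1 - x)"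
proof -
  define M where "M m = power_sum xs m powr (1 / real m)" for m
  have xs1: "\<And>x. x \<in> set xs \<Longrightarrow> \<bar>x\<bar> < 1" using xs by fastforce
  have M0: "0 \<le> M m" for m unfolding M_def by simp
  have ev: "eventually (\<lambda>m. 0 < m \<and> M m < 1) sequentially"
    unfolding M_def by (rule eventually_root_power_sum_less_one[OF xs])
  have tail: "(\<lambda>m. ln_tail (M m) m) \<longlonglongrightarrow> 0"
    unfolding M_def by (rule ln_tail_root_power_sum_tendsto_zero[OF xs])
  have partial: "(\<lambda>m. \<Sum>k<m. power_sum xs k / real k) \<longlonglongrightarrow> - (\<Sum>x\<leftarrow>xs. ln (1 - x))"
    using power_sum_sums[OF xs1] unfolding sums_def .
  have prod: "(\<Prod>x\<leftarrow>xs. 1 - x) = exp (\<Sum>x\<leftarrow>xs. ln (1 - x))"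
    by (rule prod_one_minus_eq_exp) (use xs in blast)
  have "(\<lambda>m. exp (- (\<Sum>k<m. power_sum xs k / real k) - ln_tail (M m) m))
      \<longlonglongrightarrow> exp (- (- (\<Sum>x\<leftarrow>xs. ln (1 - x))) - 0)"
    by (intro tendsto_intros partial tail)
  then have "(\<lambda>m. exp (- (\<Sum>k<m. power_sum xs k / real k) - ln_tail (M m) m))
      \<longlonglongrightarrow> (\<Prod>x\<leftarrow>xs. 1 - x)"
    by (simp add: prod)
  then show ?thesis
  proof (rule Lim_transform_eventually)
    show "eventually (\<lambda>m. exp (- (\<Sum>k<m. power_sum xs k / real k) - ln_tail (M m) m)
        = prod_lower_bound xs m) sequentially"
      using ev
    proof eventually_elim
      case (elim m)
      then have "exp (- (\<Sum>k<m. power_sum xs k / real k) - ln_tail (M m) m)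
          = (1 - M m) * exp (- (\<Sum>k = 1..<m. (power_sum xs k - M m ^ k) / real k))"
        using exp_ln_tail[OF M0[of m]] by simp
      then show ?case by (simp add: prod_lower_bound_def M_def Let_def)
    qed
  qed
qed

lemma prod_list_minus_map_divide:
  fixes c :: real assumes "c \<noteq> 0"
  shows "(\<Prod>x\<leftarrow>xs. c - x) = c ^ length xs * (\<Prod>x\<leftarrow>map (\<lambda>x. x / c) xs. 1 - x)"
  using assms by (induct xs) (auto simp: field_simps)

lemma tree_bound_eq_prod_lower_bound:
  assumes n: "0 < n" and m: "0 < m"
    and tr: "\<And>k. mat_trace (laplacian n E ^\<^sub>m k) = (\<Sum>e\<leftarrow>es. e ^ k)"
    and nonneg: "\<And>e. e \<in> set es \<Longrightarrow> 0 \<le> e"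
  shows "tree_bound n E m = real n ^ (n - 2) * prod_lower_bound (map (\<lambda>e. e / real n) es) m"
proof -
  let ?p = "power_sum (map (\<lambda>e. e / real n) es)"
  let ?M = "?p m powr (1 / real m)"
  have trace: "mat_trace (laplacian n E ^\<^sub>m k) = real n ^ k * ?p k" for k
    using n by (simp add: tr power_sum_map_divide power_sum_def[symmetric])
  have root: "(real n ^ m * ?p m) powr (real k / real m) = real n ^ k * ?M ^ k" if "0 < k" for k
  proof -
    have "(real n ^ m * ?p m) powr (real k / real m) = ((real n ^ m * ?p m) powr (1 / real m)) powr real k"
      by (simp add: powr_powr)
    also have "(real n ^ m * ?p m) powr (1 / real m) = real n * ?M"
      using n m by (simp add: powr_mult pow_powr_inverse)
    also have "(real n * ?M) powr real k = real n ^ k * ?M ^ k"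
      using n that by (simp add: powr_realpow' power_mult_distrib)
    finally show ?thesis .
  qed
  have "(\<Sum>k = 1..<m. (mat_trace (laplacian n E ^\<^sub>m k)
        - mat_trace (laplacian n E ^\<^sub>m m) powr (real k / real m)) / (real k * real n ^ k))
      = (\<Sum>k = 1..<m. (?p k - ?M ^ k) / real k)"
    using n by (intro sum.cong refl) (simp add: trace root field_simps)
  moreover have "mat_trace (laplacian n E ^\<^sub>m m) powr (1 / real m) / real n = ?M"
    using root[of 1] n by (simp add: trace)
  ultimately show ?thesis
    by (simp add: tree_bound_def prod_lower_bound_def Let_def)
qed

lemma num_spanning_trees_complement_eq_prod:
  assumes sg: "simple_graph n E" and n: "0 < n" and len: "length es = n"
    and det: "\<And>c. det (c \<cdot>\<^sub>m 1\<^sub>m n - laplacian n E) = (\<Prod>e\<leftarrow>es. c - e)"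
  shows "real (num_spanning_trees n (complement_graph E))
    = real n ^ (n - 2) * (\<Prod>x\<leftarrow>map (\<lambda>e. e / real n) es. 1 - x)"
proof -
  have pow: "real n ^ n = real n ^ 2 * real n ^ (n - 2)"
  proof (cases "n = 1")
    case False
    then have "n = 2 + (n - 2)" using n by simp
    then show ?thesis by (metis power_add)
  qed simp
  have "real n ^ 2 * real (num_spanning_trees n (complement_graph E))
      = real n ^ n * (\<Prod>x\<leftarrow>map (\<lambda>e. e / real n) es. 1 - x)"
    using det_n_minus_laplacian[OF sg n] det[of "real n"] prod_list_minus_map_divide[of "real n" es]
      n len
    by simp
  then show ?thesis using n unfolding pow by simp
qed

lemma complement_trees_spectral_form:
  assumes sg: "simple_graph n E" and m: "0 < m"
    and trace_lt: "mat_trace (laplacian n E ^\<^sub>m m) < real n ^ m"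
  obtains xs where "set xs \<subseteq> {0..<1}"
    and "real (num_spanning_trees n (complement_graph E)) = real n ^ (n - 2) * (\<Prod>x\<leftarrow>xs. 1 - x)"
    and "\<forall>k>0. tree_bound n E k = real n ^ (n - 2) * prod_lower_bound xs k"
proof -
  obtain es where len: "length es = n" and nonneg: "\<And>e. e \<in> set es \<Longrightarrow> 0 \<le> e"
    and tr: "\<And>k. mat_trace (laplacian n E ^\<^sub>m k) = (\<Sum>e\<leftarrow>es. e ^ k)"
    and det: "\<And>c. det (c \<cdot>\<^sub>m 1\<^sub>m n - laplacian n E) = (\<Prod>e\<leftarrow>es. c - e)"
    by (rule laplacian_spectrum[OF sg]) (rule that)
  have n: "0 < n"
  proof (rule ccontr)
    assume "\<not> 0 < n"
    then have "es = []" using len by simp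
    then show False using trace_lt m tr[of m] len by simp
  qed
  have "x \<in> {0..<1}" if x: "x \<in> set (map (\<lambda>e. e / real n) es)" for x
  proof -
    obtain e where e: "e \<in> set es" "x = e / real n" using x by auto
    have "e < real n"
      using lt_of_power_sum_lt[where xs = es and y = e and m = m and c = "real n"] nonneg e(1)
        trace_lt
      by (simp add: tr power_sum_def)
    then show ?thesis using e nonneg[OF e(1)] n by simp
  qed
  then show thesis
    using num_spanning_trees_complement_eq_prod[OF sg n len det]
      tree_bound_eq_prod_lower_bound[OF n _ tr nonneg]
    by (intro that) auto
qed

theorem theorem2:
  fixes n m :: nat and E :: "nat \<Rightarrow> nat \<Rightarrow> bool"
  assumes "simple_graph n E"
    and "regular_graph n E"
    and "m \<ge> 2"
    and "mat_trace (laplacian n E ^\<^sub>m m) < real n ^ m"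
  shows "real (num_spanning_trees n (complement_graph E)) \<ge> tree_bound n E m
     \<and> (tree_bound n E \<longlonglongrightarrow> real (num_spanning_trees n (complement_graph E)))"
proof -
  have m: "0 < m" using assms(3) by simp
  obtain xs where xs: "set xs \<subseteq> {0..<1}"
    and trees: "real (num_spanning_trees n (complement_graph E)) = real n ^ (n - 2) * (\<Prod>x\<leftarrow>xs. 1 - x)"
    and bound: "\<forall>k>0. tree_bound n E k = real n ^ (n - 2) * prod_lower_bound xs k"
    by (rule complement_trees_spectral_form[OF assms(1) m assms(4)])
  have xs01: "\<And>x. x \<in> set xs \<Longrightarrow> 0 \<le> x \<and> x < 1" using xs by auto
  show ?thesis
  proof
    show "tree_bound n E m \<le> real (num_spanning_trees n (complement_graph E))"
      using prod_lower_bound_le[OF xs01 m] bound m unfolding trees by (simp add: mult_left_mono)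
    have "(\<lambda>k. real n ^ (n - 2) * prod_lower_bound xs k) \<longlonglongrightarrow> real n ^ (n - 2) * (\<Prod>x\<leftarrow>xs. 1 - x)"
      by (rule tendsto_mult_left[OF prod_lower_bound_tendsto[OF xs01]])
    then show "tree_bound n E \<longlonglongrightarrow> real (num_spanning_trees n (complement_graph E))"
      unfolding trees
      by (rule Lim_transform_eventually)
        (use eventually_gt_at_top[of 0] in \<open>eventually_elim, simp add: bound\<close>)
  qed
qed

end
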